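(* Let $k\ge1$ and assume that $R_0,\dots,R_k$ (from BCG) have full column rank. Then $$[T_{k+1}^{-1}]_{1,1}-[T_k^{-1}]_{1,1}=\Phi_0^{-T}\Phi_k^T\Delta_{k+1}^{-1}\Phi_k\Phi_0^{-1},$$ and consequently $$\Phi_0^T\Big([T_{k+1}^{-1}]_{1,1}-[T_k^{-1}]_{1,1}\Big)\Phi_0=(R_k^TR_k)\Upsilon_k=\Theta_k .$$
   Context: Let $A\in\mathbb{R}^{n\times n}$ be symmetric positive definite, let $B,X_0\in\mathbb{R}^{n\times m}$, and let $X=A^{-1}B$. The block conjugate gradient (BCG) algorithm sets $R_0=B-AX_0$, $P_0=R_0$, and for $k=1,2,\dots$: $\Upsilon_{k-1}=(P_{k-1}^TAP_{k-1})^{-1}(R_{k-1}^TR_{k-1})$, $X_k=X_{k-1}+P_{k-1}\Upsilon_{k-1}$, $R_k=R_{k-1}-AP_{k-1}\Upsilon_{k-1}$, $\Xi_k=(R_{k-1}^TR_{k-1})^{-1}(R_k^TR_k)$, $P_k=R_k+P_{k-1}\Xi_k$. Define $\mathfrak{E}_k=(X-X_k)^TA(X-X_k)$ and $\Theta_k=(R_k^TR_k)\Upsilon_k$. The block Lanczos algorithm below is started from the same $R_0=B-AX_0$. Let $A\in\mathbb{R}^{n\times n}$ be symmetric positive definite and $R_0\in\mathbb{R}^{n\times m}$ of full column rank. The block Lanczos algorithm started from $R_0$ is: $V_0=0$; $V_1\Gamma_0=R_0$ is a QR factorization ($V_1\in\mathbb{R}^{n\times m}$ with orthonormal columns, $\Gamma_0\in\mathbb{R}^{m\times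 m}$ upper triangular); for $k=1,2,\dots$: $W=AV_k-V_{k-1}\Gamma_{k-1}^T$, $\Omega_k=V_k^TW$, and $V_{k+1}\Gamma_k=W-V_k\Omega_k$ is a QR factorization. It is assumed that for all indices considered the block Krylov subspace $\mathrm{colspan}\{R_0,AR_0,\dots,A^{j-1}R_0\}$ has dimension $jm$, so that every $\Gamma_j$ is nonsingular and $V_i^TV_j=\delta_{ij}I_m$. Put $\mathcal V_k=(V_1,\dots,V_k)\in\mathbb{R}^{n\times km}$ and let $T_k\in\mathbb{R}^{km\times km}$ be the symmetric block tridiagonal matrix with diagonal blocks $\Omega_1,\dots,\Omega_k$, subdiagonal blocks $\Gamma_1,\dots,\Gamma_{k-1}$ and superdiagonal blocks $\Gamma_1^T,\dots,\Gamma_{k-1}^T$; one has $A\mathcal V_k=\mathcal V_kT_k+V_{k+1}\Gamma_kE_k^T$ and $T_k=\mathcal V_k^TA\mathcal V_k$ is symmetric positive definite. Define $\Delta_1=\Omega_1$, $\Delta_j=\Omega_j-\Gamma_{j-1}\Delta_{j-1}^{-1}\Gamma_{j-1}^T$ ($j\ge2$) (the diagonal blocks of the block $LDL^T$-type factorization of $T_k$; they are symmetric positive definite), $\Pi_j=\Gamma_j\Delta_j^{-1}$, $\Phi_0=\Gamma_0$ and $\Phi_j=\Pi_j\Phi_{j-1}$. Let $E_j=e_j\otimes I_m\in\mathbb{R}^{km\times m}$; for $M\in\mathbb{R}^{km\times km}$, $[M]_{i,j}$ denotes its $(i,j)$ block of size $m\times m$, and for $Y\in\mathbb{R}^{km\times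 m}$, $[Y]_j$ denotes its $j$th $m\times m$ block. *)

theory Defs
  imports "Jordan_Normal_Form.Gauss_Jordan_Elimination" "Jordan_Normal_Form.DL_Rank"
begin

definition minv :: "real mat \<Rightarrow> real mat" where
  "minv M = the (mat_inverse M)"

definition spd :: "nat \<Rightarrow> real mat \<Rightarrow> bool" where
  "spd n A \<longleftrightarrow> A \<in> carrier_mat n n \<and> transpose_mat A = A \<and>
     (\<forall>v \<in> carrier_vec n. v \<noteq> 0\<^sub>v n \<longrightarrow> v \<bullet> (A *\<^sub>v v) > 0)"

definition full_col_rank :: "real mat \<Rightarrow> bool" where
  "full_col_rank M \<longleftrightarrow> vec_space.rank (dim_row M) M = dim_col M"

text \<open>Block Krylov matrix (R0, A R0, ..., A^(j-1) R0), of size n x (j m).\<close>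
definition krylov_mat :: "nat \<Rightarrow> real mat \<Rightarrow> real mat \<Rightarrow> nat \<Rightarrow> real mat" where
  "krylov_mat m A R0 j = mat (dim_row R0) (j * m)
     (\<lambda>(r, c). ((A ^\<^sub>m (c div m)) * R0) $$ (r, c mod m))"

fun bcg :: "real mat \<Rightarrow> real mat \<Rightarrow> real mat \<Rightarrow> nat \<Rightarrow> real mat \<times> real mat \<times> real mat" where
  "bcg A B X0 0 = (X0, B - A * X0, B - A * X0)"
| "bcg A B X0 (Suc k) =
     (case bcg A B X0 k of (X, R, P) \<Rightarrow>
        let Ups = minv (transpose_mat P * A * P) * (transpose_mat R * R);
            X' = X + P * Ups;
            R' = R - A * P * Ups;
            Xi = minv (transpose_mat R * R) * (transpose_mat R' * R');
            P' = R' + P * Xi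
        in (X', R', P'))"

definition bcg_R :: "real mat \<Rightarrow> real mat \<Rightarrow> real mat \<Rightarrow> nat \<Rightarrow> real mat" where
  "bcg_R A B X0 k = fst (snd (bcg A B X0 k))"

definition bcg_P :: "real mat \<Rightarrow> real mat \<Rightarrow> real mat \<Rightarrow> nat \<Rightarrow> real mat" where
  "bcg_P A B X0 k = snd (snd (bcg A B X0 k))"

definition bcg_Upsilon :: "real mat \<Rightarrow> real mat \<Rightarrow> real mat \<Rightarrow> nat \<Rightarrow> real mat" where
  "bcg_Upsilon A B X0 k =
     minv (transpose_mat (bcg_P A B X0 k) * A * bcg_P A B X0 k)
       * (transpose_mat (bcg_R A B X0 k) * bcg_R A B X0 k)"

definition bcg_Theta :: "real mat \<Rightarrow> real mat \<Rightarrow> real mat \<Rightarrow> nat \<Rightarrow> real mat" where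
  "bcg_Theta A B X0 k =
     (transpose_mat (bcg_R A B X0 k) * bcg_R A B X0 k) * bcg_Upsilon A B X0 k"

text \<open>V, G (= Gamma), Om (= Omega) are generated by the block Lanczos algorithm started
  from R0, where the QR factorizations are arbitrary (orthonormal columns times an upper
  triangular factor).\<close>
definition block_lanczos ::
  "nat \<Rightarrow> nat \<Rightarrow> real mat \<Rightarrow> real mat \<Rightarrow> (nat \<Rightarrow> real mat) \<Rightarrow> (nat \<Rightarrow> real mat)
     \<Rightarrow> (nat \<Rightarrow> real mat) \<Rightarrow> nat \<Rightarrow> bool" where
  "block_lanczos n m A R0 V G Om K \<longleftrightarrow>
     V 0 = 0\<^sub>m n m \<and>
     V 1 \<in> carrier_mat n m \<and> G 0 \<in> carrier_mat m m \<and> upper_triangular (G 0) \<and>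
     transpose_mat (V 1) * V 1 = 1\<^sub>m m \<and> V 1 * G 0 = R0 \<and>
     (\<forall>j. 1 \<le> j \<and> j \<le> K \<longrightarrow>
        Om j = transpose_mat (V j) * (A * V j - V (j - 1) * transpose_mat (G (j - 1)))) \<and>
     (\<forall>j. 1 \<le> j \<and> j < K \<longrightarrow>
        V (Suc j) \<in> carrier_mat n m \<and> G j \<in> carrier_mat m m \<and> upper_triangular (G j) \<and>
        transpose_mat (V (Suc j)) * V (Suc j) = 1\<^sub>m m \<and>
        V (Suc j) * G j = (A * V j - V (j - 1) * transpose_mat (G (j - 1))) - V j * Om j)"

text \<open>T_k: symmetric block tridiagonal (k m) x (k m) matrix, diagonal blocks Omega_1..Omega_k,
  subdiagonal blocks Gamma_1..Gamma_(k-1), superdiagonal blocks their transposes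
  (block indices are 1-based, as in the paper).\<close>
definition lanczos_T :: "nat \<Rightarrow> (nat \<Rightarrow> real mat) \<Rightarrow> (nat \<Rightarrow> real mat) \<Rightarrow> nat \<Rightarrow> real mat" where
  "lanczos_T m Om G k = mat (k * m) (k * m) (\<lambda>(r, c).
     let i = r div m + 1; j = c div m + 1; a = r mod m; b = c mod m in
     if i = j then Om i $$ (a, b)
     else if i = j + 1 then G j $$ (a, b)
     else if j = i + 1 then G i $$ (b, a)
     else 0)"

definition block11 :: "nat \<Rightarrow> real mat \<Rightarrow> real mat" where
  "block11 m M = mat m m (\<lambda>(a, b). M $$ (a, b))"

fun lanczos_Delta :: "(nat \<Rightarrow> real mat) \<Rightarrow> (nat \<Rightarrow> real mat) \<Rightarrow> nat \<Rightarrow> real mat" where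
  "lanczos_Delta Om G 0 = undefined"
| "lanczos_Delta Om G (Suc 0) = Om 1"
| "lanczos_Delta Om G (Suc (Suc j)) =
     Om (Suc (Suc j)) - G (Suc j) * minv (lanczos_Delta Om G (Suc j)) * transpose_mat (G (Suc j))"

definition lanczos_Pi :: "(nat \<Rightarrow> real mat) \<Rightarrow> (nat \<Rightarrow> real mat) \<Rightarrow> nat \<Rightarrow> real mat" where
  "lanczos_Pi Om G j = G j * minv (lanczos_Delta Om G j)"

fun lanczos_Phi :: "(nat \<Rightarrow> real mat) \<Rightarrow> (nat \<Rightarrow> real mat) \<Rightarrow> nat \<Rightarrow> real mat" where
  "lanczos_Phi Om G 0 = G 0"
| "lanczos_Phi Om G (Suc j) = lanczos_Pi Om G (Suc j) * lanczos_Phi Om G j"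

end

(*
  The block Lanczos vectors diagonalise BCG: by induction on j, the residuals and search directions
  are R_j = (-1)^j V_{j+1} Phi_j and P_j = (-1)^j U_j Phi_j, where U_j is the Lanczos-side direction
  with U_j^T A U_j = Delta_{j+1}. Hence Theta_j = R_j^T R_j Upsilon_j = Phi_j^T Delta_{j+1}^{-1} Phi_j.
  Full column rank of R_{j+1} forces Phi_{j+1}, hence Gamma_{j+1}, to be nonsingular; this is what
  propagates the mutual orthogonality of the blocks V_i.

  On the other side, T_{N+1} is T_N bordered by the coupling block E_N Gamma_N^T and Omega_{N+1},
  whose Schur complement is exactly Delta_{N+1}. The Schur complement formula for the inverse then
  adds Psi_N^T Delta_{N+1}^{-1} Psi_N to the (1,1) block, with Psi_N = Pi_N ... Pi_1 = Phi_N Gamma_0^{-1};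
  the blocks of T_N^{-1} needed for this update are tracked by a second induction.
*)

theory Submission
  imports Defs
begin

text \<open>The library states these laws with \<open>carrier_mat\<close> premises; with dimension equations
  instead, the simplifier discharges the side conditions itself.\<close>

lemma assoc_mult_mat_dim:
  "dim_col (A :: 'a :: semiring_0 mat) = dim_row B \<Longrightarrow> dim_col B = dim_row C \<Longrightarrow> A * B * C = A * (B * C)"
  by (rule assoc_mult_mat[of A "dim_row A" "dim_col A" B "dim_col B" C "dim_col C"]) auto

lemma mult_add_distrib_mat_dim:
  "dim_col (A :: 'a :: semiring_0 mat) = dim_row B \<Longrightarrow> dim_row B = dim_row C \<Longrightarrow> dim_col B = dim_col C
   \<Longrightarrow> A * (B + C) = A * B + A * C"
  by (rule mult_add_distrib_mat[of A "dim_row A" "dim_col A"]) auto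

lemma add_mult_distrib_mat_dim:
  "dim_col (A :: 'a :: semiring_0 mat) = dim_row C \<Longrightarrow> dim_row A = dim_row B \<Longrightarrow> dim_col A = dim_col B
   \<Longrightarrow> (A + B) * C = A * C + B * C"
  by (rule add_mult_distrib_mat[of A "dim_row A" "dim_col A"]) auto

lemma mult_minus_distrib_mat_dim:
  "dim_col (A :: 'a :: ring mat) = dim_row B \<Longrightarrow> dim_row B = dim_row C \<Longrightarrow> dim_col B = dim_col C
   \<Longrightarrow> A * (B - C) = A * B - A * C"
  by (rule mult_minus_distrib_mat[of A "dim_row A" "dim_col A"]) auto

lemma minus_mult_distrib_mat_dim:
  "dim_col (A :: 'a :: ring mat) = dim_row C \<Longrightarrow> dim_row A = dim_row B \<Longrightarrow> dim_col A = dim_col B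
   \<Longrightarrow> (A - B) * C = A * C - B * C"
  by (rule minus_mult_distrib_mat[of A "dim_row A" "dim_col A"]) auto

lemma transpose_mult_dim:
  "dim_col (A :: 'a :: comm_semiring_0 mat) = dim_row B \<Longrightarrow> transpose_mat (A * B) = transpose_mat B * transpose_mat A"
  by (rule transpose_mult[of A "dim_row A" "dim_col A"]) auto

lemma transpose_add_dim:
  "dim_row (A :: 'a :: monoid_add mat) = dim_row B \<Longrightarrow> dim_col A = dim_col B \<Longrightarrow>
   transpose_mat (A + B) = transpose_mat A + transpose_mat B"
  by (rule transpose_add[of A "dim_row A" "dim_col A"]) auto

lemma transpose_minus_dim:
  "dim_row (A :: 'a :: group_add mat) = dim_row B \<Longrightarrow> dim_col A = dim_col B \<Longrightarrow>
   transpose_mat (A - B) = transpose_mat A - transpose_mat B"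
  by (rule transpose_minus[of A "dim_row A" "dim_col A"]) auto

lemma mult_smult_assoc_mat_dim:
  "dim_col (A :: 'a :: comm_ring mat) = dim_row B \<Longrightarrow> (c \<cdot>\<^sub>m A) * B = c \<cdot>\<^sub>m (A * B)"
  by (rule mult_smult_assoc_mat[of A "dim_row A" "dim_col A" B "dim_col B"]) auto

lemma mult_smult_distrib_dim:
  "dim_col (A :: 'a :: comm_ring mat) = dim_row B \<Longrightarrow> A * (c \<cdot>\<^sub>m B) = c \<cdot>\<^sub>m (A * B)"
  by (rule mult_smult_distrib[of A "dim_row A" "dim_col A" B "dim_col B"]) auto

lemma transpose_smult_mat: "transpose_mat (c \<cdot>\<^sub>m (A :: 'a :: times mat)) = c \<cdot>\<^sub>m transpose_mat A"
  by (intro eq_matI) auto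

lemma smult_smult_mat: "c \<cdot>\<^sub>m (d \<cdot>\<^sub>m (A :: 'a :: semigroup_mult mat)) = (c * d) \<cdot>\<^sub>m A"
  by (intro eq_matI) (auto simp: mult.assoc)

lemma smult_one_mat: "1 \<cdot>\<^sub>m (A :: 'a :: monoid_mult mat) = A"
  by (intro eq_matI) auto

lemma right_add_zero_mat_dim: "dim_row (A :: 'a :: monoid_add mat) = r \<Longrightarrow> dim_col A = c \<Longrightarrow> A + 0\<^sub>m r c = A"
  by (intro eq_matI) auto

lemma left_add_zero_mat_dim: "dim_row (A :: 'a :: monoid_add mat) = r \<Longrightarrow> dim_col A = c \<Longrightarrow> 0\<^sub>m r c + A = A"
  by (intro eq_matI) auto

lemma minus_zero_mat_dim: "dim_row (A :: 'a :: group_add mat) = r \<Longrightarrow> dim_col A = c \<Longrightarrow> A - 0\<^sub>m r c = A"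
  by (intro eq_matI) auto

lemmas mat_dim_simps = assoc_mult_mat_dim mult_add_distrib_mat_dim add_mult_distrib_mat_dim
  mult_minus_distrib_mat_dim minus_mult_distrib_mat_dim transpose_mult_dim transpose_add_dim
  transpose_minus_dim right_add_zero_mat_dim left_add_zero_mat_dim minus_zero_mat_dim
  mult_smult_assoc_mat_dim mult_smult_distrib_dim transpose_smult_mat

lemma assoc_mult_mat_eq:
  "(P :: 'a :: semiring_0 mat) * Q = R \<Longrightarrow> dim_col P = dim_row Q \<Longrightarrow> dim_col Q = dim_row X
   \<Longrightarrow> P * (Q * X) = R * X"
  by (subst assoc_mult_mat_dim[symmetric]) auto

lemma assoc_mult_mat_eq3:
  "(P :: 'a :: semiring_0 mat) * (Q * R) = S \<Longrightarrow> dim_col P = dim_row Q \<Longrightarrow> dim_col Q = dim_row R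
   \<Longrightarrow> dim_col R = dim_row X \<Longrightarrow> P * (Q * (R * X)) = S * X"
  by (subst assoc_mult_mat_dim[symmetric], simp, simp)+ (simp add: assoc_mult_mat_dim)

lemma smult_minus_smult_add_mat:
  "dim_row (X :: 'a :: ring mat) = dim_row Y \<Longrightarrow> dim_col X = dim_col Y \<Longrightarrow>
   c \<cdot>\<^sub>m X - c \<cdot>\<^sub>m (X + Y) = (- c) \<cdot>\<^sub>m Y"
  by (intro eq_matI) (auto simp: algebra_simps)

lemma uminus_smult_add_smult_mat:
  "dim_row (X :: 'a :: ring mat) = dim_row Y \<Longrightarrow> dim_col X = dim_col Y \<Longrightarrow>
   (- c) \<cdot>\<^sub>m X + c \<cdot>\<^sub>m Y = (- c) \<cdot>\<^sub>m (X - Y)"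
  by (intro eq_matI) (auto simp: algebra_simps)

lemma gram_smult_mult:
  assumes "X \<in> carrier_mat n p" "F \<in> carrier_mat p q" "(c :: 'a :: comm_ring_1) * c = 1"
  shows "transpose_mat (c \<cdot>\<^sub>m (X * F)) * (c \<cdot>\<^sub>m (X * F)) = transpose_mat F * ((transpose_mat X * X) * F)"
  using assms by (simp add: mat_dim_simps smult_smult_mat smult_one_mat)

lemma congruence_smult_mult:
  assumes "X \<in> carrier_mat n p" "F \<in> carrier_mat p q" "M \<in> carrier_mat n n" "(c :: 'a :: comm_ring_1) * c = 1"
  shows "transpose_mat (c \<cdot>\<^sub>m (X * F)) * M * (c \<cdot>\<^sub>m (X * F)) = transpose_mat F * ((transpose_mat X * (M * X)) * F)"
  using assms by (simp add: mat_dim_simps smult_smult_mat smult_one_mat)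


text \<open>\<open>minv\<close> is \<open>the (mat_inverse M)\<close>, a junk value for singular \<open>M\<close>.\<close>
definition has_minv :: "nat \<Rightarrow> real mat \<Rightarrow> bool" where
  "has_minv n M \<longleftrightarrow>
     M \<in> carrier_mat n n \<and> minv M \<in> carrier_mat n n \<and> M * minv M = 1\<^sub>m n \<and> minv M * M = 1\<^sub>m n"

definition mat_injective :: "'a :: semiring_0 mat \<Rightarrow> bool" where
  "mat_injective M \<longleftrightarrow>
     (\<forall>v \<in> carrier_vec (dim_col M). M *\<^sub>v v = 0\<^sub>v (dim_row M) \<longrightarrow> v = 0\<^sub>v (dim_col M))"

lemma has_minvD:
  assumes "has_minv n M"
  shows "M \<in> carrier_mat n n" "minv M \<in> carrier_mat n n"
    "dim_row M = n" "dim_col M = n" "dim_row (minv M) = n" "dim_col (minv M) = n"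
    "M * minv M = 1\<^sub>m n" "minv M * M = 1\<^sub>m n"
  using assms unfolding has_minv_def by auto

lemma det_nonzero_imp_has_minv:
  assumes M: "M \<in> carrier_mat n n" and "det M \<noteq> 0"
  shows "has_minv n M"
proof -
  have "M \<in> Units (ring_mat TYPE(real) n ())" using det_non_zero_imp_unit[OF M assms(2)] .
  then obtain B where B: "mat_inverse M = Some B"
    using mat_inverse(1)[OF M, of "()"] by (cases "mat_inverse M") auto
  from mat_inverse(2)[OF M B] show ?thesis unfolding has_minv_def minv_def B using M by auto
qed

lemma mat_injective_imp_has_minv:
  assumes M: "M \<in> carrier_mat n n" and "mat_injective M"
  shows "has_minv n M"
  using assms det_0_iff_vec_prod_zero_field[OF M] det_nonzero_imp_has_minv[OF M]
  unfolding mat_injective_def by auto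

lemma right_inverse_imp_has_minv:
  assumes M: "M \<in> carrier_mat n n" and N: "N \<in> carrier_mat n n" and MN: "M * N = 1\<^sub>m n"
  shows "has_minv n M" "minv M = N"
proof -
  have "det M * det N = 1" using arg_cong[OF MN, of det] det_mult[OF M N] by simp
  then have "det M \<noteq> 0" by auto
  then show M_inv: "has_minv n M" using det_nonzero_imp_has_minv[OF M] by blast
  note dims = has_minvD[OF M_inv]
  have "minv M = minv M * (M * N)" using dims(2) by (simp add: MN)
  also have "\<dots> = (minv M * M) * N" using dims(1,2) N by (simp add: assoc_mult_mat)
  also have "\<dots> = N" using N by (simp add: dims(8))
  finally show "minv M = N" .
qed

lemma has_minv_mult:
  assumes A: "has_minv n A" and B: "has_minv n B"
  shows "has_minv n (A * B)" "minv (A * B) = minv B * minv A"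
proof -
  note dims = has_minvD[OF A] has_minvD[OF B]
  have "B * (minv B * minv A) = minv A" using assoc_mult_mat_eq[OF dims(15)] dims by simp
  then have "A * B * (minv B * minv A) = 1\<^sub>m n" using dims by (simp add: assoc_mult_mat_dim)
  moreover have "A * B \<in> carrier_mat n n" "minv B * minv A \<in> carrier_mat n n" using dims by auto
  ultimately show "has_minv n (A * B)" "minv (A * B) = minv B * minv A"
    using right_inverse_imp_has_minv by blast+
qed

lemma has_minv_transpose:
  assumes A: "has_minv n A"
  shows "has_minv n (transpose_mat A)" "minv (transpose_mat A) = transpose_mat (minv A)"
proof -
  note dims = has_minvD[OF A]
  have "transpose_mat A * transpose_mat (minv A) = 1\<^sub>m n"
    using dims transpose_mult_dim[of "minv A" A, symmetric] by simp
  moreover have "transpose_mat A \<in> carrier_mat n n" "transpose_mat (minv A) \<in> carrier_mat n n"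
    using dims by auto
  ultimately show "has_minv n (transpose_mat A)" "minv (transpose_mat A) = transpose_mat (minv A)"
    using right_inverse_imp_has_minv by blast+
qed

lemma minv_symmetric:
  assumes "has_minv n A" and "transpose_mat A = A"
  shows "transpose_mat (minv A) = minv A"
  using has_minv_transpose(2)[OF assms(1)] assms(2) by simp

lemma minv_congruence:
  assumes F: "has_minv m F" and D: "has_minv m D"
  shows "minv (transpose_mat F * (D * F)) * (transpose_mat F * F) = minv F * (minv D * F)"
proof -
  note dims = has_minvD[OF F] has_minvD[OF D]
  have FDF: "minv (transpose_mat F * (D * F)) = minv F * minv D * transpose_mat (minv F)"
    using has_minv_mult[OF D F] has_minv_transpose[OF F]
      has_minv_mult(2)[OF has_minv_transpose(1)[OF F] has_minv_mult(1)[OF D F]]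
    by simp
  have "transpose_mat (minv F) * transpose_mat F = 1\<^sub>m m"
    using dims by (simp add: transpose_mult_dim[symmetric])
  from assoc_mult_mat_eq[OF this] show ?thesis unfolding FDF using dims by (simp add: mat_dim_simps)
qed

lemma minv_transpose_congruence:
  assumes F: "has_minv m F" and Psi: "Psi \<in> carrier_mat m m" and D: "D \<in> carrier_mat m m"
  shows "minv (transpose_mat F) * transpose_mat (Psi * F) * D * (Psi * F) * minv F = transpose_mat Psi * (D * Psi)"
    "transpose_mat F * (transpose_mat Psi * (D * Psi)) * F = transpose_mat (Psi * F) * (D * (Psi * F))"
proof -
  note dims = has_minvD[OF F]
  have "transpose_mat (minv F) * transpose_mat F = 1\<^sub>m m"
    using dims by (simp add: transpose_mult_dim[symmetric])
  from assoc_mult_mat_eq[OF this]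
  show "minv (transpose_mat F) * transpose_mat (Psi * F) * D * (Psi * F) * minv F = transpose_mat Psi * (D * Psi)"
    using dims Psi D has_minv_transpose(2)[OF F]
    by (simp add: mat_dim_simps assoc_mult_mat_eq[OF dims(7)])
  show "transpose_mat F * (transpose_mat Psi * (D * Psi)) * F = transpose_mat (Psi * F) * (D * (Psi * F))"
    using dims Psi D by (simp add: mat_dim_simps)
qed

lemma minv_gram:
  assumes "has_minv m F"
  shows "minv (transpose_mat F * F) = minv F * transpose_mat (minv F)"
  using has_minv_mult(2)[OF has_minv_transpose(1)[OF assms] assms] has_minv_transpose(2)[OF assms] by simp

lemma left_inverse_imp_mat_injective:
  assumes LM: "(L :: 'a :: comm_ring_1 mat) * M = 1\<^sub>m (dim_col M)" and dims: "dim_col L = dim_row M"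
  shows "mat_injective M"
  unfolding mat_injective_def
proof (intro ballI impI)
  fix v assume v: "v \<in> carrier_vec (dim_col M)" and Mv: "M *\<^sub>v v = 0\<^sub>v (dim_row M)"
  have "v = (L * M) *\<^sub>v v" unfolding LM using v by simp
  also have "\<dots> = L *\<^sub>v (M *\<^sub>v v)" using dims v
    by (intro assoc_mult_mat_vec[of L "dim_row L" "dim_col L" M "dim_col M"]) auto
  also have "\<dots> = 0\<^sub>v (dim_col M)" unfolding Mv
    using dims arg_cong[OF LM, of dim_row] by (intro eq_vecI) (auto simp: scalar_prod_def)
  finally show "v = 0\<^sub>v (dim_col M)" .
qed

lemma mat_injective_mult_right:
  assumes AB: "mat_injective ((A :: 'a :: comm_ring_1 mat) * B)" and dims: "dim_col A = dim_row B"
  shows "mat_injective B"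
  unfolding mat_injective_def
proof (intro ballI impI)
  fix v assume v: "v \<in> carrier_vec (dim_col B)" and Bv: "B *\<^sub>v v = 0\<^sub>v (dim_row B)"
  have "A * B *\<^sub>v v = A *\<^sub>v (B *\<^sub>v v)"
    using dims v by (intro assoc_mult_mat_vec[of A "dim_row A" "dim_col A" B "dim_col B"]) auto
  also have "\<dots> = 0\<^sub>v (dim_row A)" unfolding Bv
    by (rule eq_vecI) (auto simp: dims scalar_prod_def)
  finally show "v = 0\<^sub>v (dim_col B)" using AB v unfolding mat_injective_def by auto
qed

lemma mat_injective_smult:
  assumes inj: "mat_injective (c \<cdot>\<^sub>m (M :: 'a :: field mat))" and c: "c \<noteq> 0"
  shows "mat_injective M"
  unfolding mat_injective_def
proof (intro ballI impI)
  fix v assume v: "v \<in> carrier_vec (dim_col M)" and Mv: "M *\<^sub>v v = 0\<^sub>v (dim_row M)"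
  have "c \<cdot>\<^sub>m M *\<^sub>v v = 0\<^sub>v (dim_row M)"
  proof (rule eq_vecI)
    fix i assume i: "i < dim_vec (0\<^sub>v (dim_row M))"
    have "row (c \<cdot>\<^sub>m M) i \<bullet> v = c * (row M i \<bullet> v)"
      using i v by (auto simp: scalar_prod_def sum_distrib_left ac_simps)
    then show "(c \<cdot>\<^sub>m M *\<^sub>v v) $ i = 0\<^sub>v (dim_row M) $ i"
      using i arg_cong[OF Mv, of "\<lambda>w. w $ i"] by simp
  qed simp
  then show "v = 0\<^sub>v (dim_col M)" using inj v unfolding mat_injective_def by simp
qed

lemma (in vec_space) rank_le_card_set_cols:
  assumes "A \<in> carrier_mat n nc" shows "rank A \<le> card (set (cols A))"
proof -
  obtain S where S: "maximal S (\<lambda>T. T \<subseteq> set (cols A) \<and> lin_indpt T)"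
    using maximal_exists[of "\<lambda>T. T \<subseteq> set (cols A) \<and> lin_indpt T" "card (set (cols A))" "{}"]
    by (meson List.finite_set card_mono empty_iff empty_subsetI finite_lin_indpt2 rev_finite_subset)
  then have "card S \<le> card (set (cols A))" by (simp add: card_mono maximal_def)
  then show ?thesis using rank_card_indpt[OF assms S] by simp
qed

lemma full_col_rank_imp_mat_injective:
  assumes "full_col_rank R" shows "mat_injective R"
proof -
  interpret vec_space "TYPE(real)" "dim_row R" .
  have R: "R \<in> carrier_mat (dim_row R) (dim_col R)" by auto
  have rank: "rank R = dim_col R" using assms unfolding full_col_rank_def by simp
  have distinct: "distinct (cols R)"
  proof (rule ccontr)
    assume "\<not> distinct (cols R)"
    then have "card (set (cols R)) < length (cols R)"
      using card_distinct card_length le_neq_implies_less by blast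
    with rank_le_card_set_cols[OF R] rank show False by simp
  qed
  have indpt: "lin_indpt (set (cols R))" using full_rank_lin_indpt[OF R rank distinct] .
  show ?thesis unfolding mat_injective_def
  proof (intro ballI impI)
    fix v assume v: "v \<in> carrier_vec (dim_col R)" and Rv: "R *\<^sub>v v = 0\<^sub>v (dim_row R)"
    show "v = 0\<^sub>v (dim_col R)"
    proof (rule ccontr)
      assume "v \<noteq> 0\<^sub>v (dim_col R)"
      from lin_depI[OF R v this Rv distinct] indpt show False by simp
    qed
  qed
qed

lemma congruence_symmetric:
  assumes "(A :: 'a :: comm_semiring_0 mat) \<in> carrier_mat n n" "transpose_mat A = A" "X \<in> carrier_mat n m"
  shows "transpose_mat (transpose_mat X * A * X) = transpose_mat X * A * X"
  using assms by (simp add: transpose_mult_dim assoc_mult_mat_dim)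

lemma spd_congruence_has_minv:
  assumes A: "spd n A" and X: "X \<in> carrier_mat n m" and inj: "mat_injective X"
  shows "has_minv m (transpose_mat X * A * X)"
proof (rule mat_injective_imp_has_minv)
  have A_carrier: "A \<in> carrier_mat n n" using A unfolding spd_def by auto
  show "transpose_mat X * A * X \<in> carrier_mat m m" using A_carrier X by auto
  show "mat_injective (transpose_mat X * A * X)" unfolding mat_injective_def
  proof (intro ballI impI)
    fix v assume "v \<in> carrier_vec (dim_col (transpose_mat X * A * X))"
      and XAXv: "transpose_mat X * A * X *\<^sub>v v = 0\<^sub>v (dim_row (transpose_mat X * A * X))"
    then have v: "v \<in> carrier_vec m" using X by auto
    define w where "w = X *\<^sub>v v"
    have w: "w \<in> carrier_vec n" using X v unfolding w_def by auto
    have "transpose_mat X * A * X *\<^sub>v v = transpose_mat X *\<^sub>v (A *\<^sub>v w)"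
    proof -
      have "transpose_mat X * A * X *\<^sub>v v = (transpose_mat X * A) *\<^sub>v (X *\<^sub>v v)"
        by (rule assoc_mult_mat_vec) (use X A_carrier v in auto)
      also have "\<dots> = transpose_mat X *\<^sub>v (A *\<^sub>v (X *\<^sub>v v))"
        by (rule assoc_mult_mat_vec) (use X A_carrier v in auto)
      finally show ?thesis by (simp add: w_def)
    qed
    then have "w \<bullet> (A *\<^sub>v w) = (transpose_mat X *\<^sub>v (A *\<^sub>v w)) \<bullet> v \<and> transpose_mat X *\<^sub>v (A *\<^sub>v w) = 0\<^sub>v m"
      using transpose_vec_mult_scalar[OF X v, of "A *\<^sub>v w"] A_carrier w X v XAXv
        comm_scalar_prod[of w n "A *\<^sub>v w"] unfolding w_def by auto
    then have "w \<bullet> (A *\<^sub>v w) = 0" using v by simp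
    then have "w = 0\<^sub>v n" using A w unfolding spd_def by force
    then show "v = 0\<^sub>v (dim_col (transpose_mat X * A * X))"
      using inj v X unfolding mat_injective_def w_def by auto
  qed
qed

section \<open>The block Lanczos recurrence\<close>

locale spd_block_lanczos =
  fixes n m K :: nat and A R0 :: "real mat" and V G Om :: "nat \<Rightarrow> real mat"
  assumes spd: "spd n A"
    and lanczos: "block_lanczos n m A R0 V G Om K"
begin

definition W :: "nat \<Rightarrow> real mat" where
  "W j = (A * V j - V (j - 1) * transpose_mat (G (j - 1))) - V j * Om j"

abbreviation "Delta j \<equiv> lanczos_Delta Om G j"
abbreviation "Phi j \<equiv> lanczos_Phi Om G j"

lemma A_carrier: "A \<in> carrier_mat n n" and A_symmetric: "transpose_mat A = A"
  using spd unfolding spd_def by auto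

lemma dim_A [simp]: "dim_row A = n" "dim_col A = n"
  using A_carrier by auto

lemma V_0: "V 0 = 0\<^sub>m n m"
  using lanczos unfolding block_lanczos_def by auto

lemma V_Suc:
  assumes "Suc i \<le> K"
  shows "V (Suc i) \<in> carrier_mat n m" "transpose_mat (V (Suc i)) * V (Suc i) = 1\<^sub>m m"
  using lanczos assms unfolding block_lanczos_def by (cases i; simp)+

lemma V_carrier: "j \<le> K \<Longrightarrow> V j \<in> carrier_mat n m"
  using V_0 V_Suc(1) by (cases j) auto

lemma dim_V [simp]: "j \<le> K \<Longrightarrow> dim_row (V j) = n" "j \<le> K \<Longrightarrow> dim_col (V j) = m"
  using V_carrier by auto

lemma G_carrier: "j < K \<Longrightarrow> G j \<in> carrier_mat m m"
  using lanczos unfolding block_lanczos_def by (cases j) (auto simp: Suc_le_eq)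

lemma dim_G [simp]: "j < K \<Longrightarrow> dim_row (G j) = m" "j < K \<Longrightarrow> dim_col (G j) = m"
  using G_carrier by auto

lemma Om_eq:
  "1 \<le> j \<Longrightarrow> j \<le> K \<Longrightarrow> Om j = transpose_mat (V j) * (A * V j - V (j - 1) * transpose_mat (G (j - 1)))"
  using lanczos unfolding block_lanczos_def by auto

lemma dim_Om [simp]: "1 \<le> j \<Longrightarrow> j \<le> K \<Longrightarrow> dim_row (Om j) = m" "1 \<le> j \<Longrightarrow> j \<le> K \<Longrightarrow> dim_col (Om j) = m"
  using Om_eq by auto

lemma Om_carrier: "1 \<le> j \<Longrightarrow> j \<le> K \<Longrightarrow> Om j \<in> carrier_mat m m"
  by (rule carrier_matI) auto

lemma V_orthonormal: "1 \<le> j \<Longrightarrow> j \<le> K \<Longrightarrow> transpose_mat (V j) * V j = 1\<^sub>m m"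
  using V_Suc(2) by (cases j) auto

lemma V_Suc_G: "1 \<le> j \<Longrightarrow> j < K \<Longrightarrow> V (Suc j) * G j = W j"
  using lanczos unfolding block_lanczos_def W_def by auto

lemma V_1_G_0: "V 1 * G 0 = R0"
  using lanczos unfolding block_lanczos_def by auto

lemma dim_W [simp]: "1 \<le> j \<Longrightarrow> j \<le> K \<Longrightarrow> dim_row (W j) = n" "1 \<le> j \<Longrightarrow> j \<le> K \<Longrightarrow> dim_col (W j) = m"
  unfolding W_def by auto

lemma Delta_carrier:
  assumes "1 \<le> i" "i \<le> K"
  shows "Delta i \<in> carrier_mat m m"
proof (cases i)
  case (Suc j)
  with assms show ?thesis by (cases j) (auto intro!: carrier_matI)
qed (use assms in simp)

lemma dim_Delta [simp]:
  "1 \<le> i \<Longrightarrow> i \<le> K \<Longrightarrow> dim_row (Delta i) = m" "1 \<le> i \<Longrightarrow> i \<le> K \<Longrightarrow> dim_col (Delta i) = m"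
  using Delta_carrier by auto

definition orthonormal_upto :: "nat \<Rightarrow> bool" where
  "orthonormal_upto p \<longleftrightarrow> (\<forall>a b. 1 \<le> a \<longrightarrow> a \<le> p \<longrightarrow> 1 \<le> b \<longrightarrow> b \<le> p \<longrightarrow>
      transpose_mat (V a) * V b = (if a = b then 1\<^sub>m m else 0\<^sub>m m m))"

text \<open>\<open>block_lanczos\<close> only makes each \<open>V\<^sub>j\<close> orthonormal; orthogonality between blocks has to be
  derived, and it propagates only while the \<open>\<Gamma>\<^sub>j\<close> are nonsingular (\<open>orthonormal_upto_Suc\<close>).
  The convention \<open>V\<^sub>0 = 0\<close> makes the next lemma hold for the index 0 as well.\<close>
lemma orthonormal_upto_orthogonal:
  assumes "orthonormal_upto p" "a \<le> p" "b \<le> p" "a \<noteq> b" "p \<le> K"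
  shows "transpose_mat (V a) * V b = 0\<^sub>m m m"
  using assms V_0 unfolding orthonormal_upto_def
  by (cases "a = 0"; cases "b = 0") auto

lemma Om_eq_VAV:
  assumes orth: "orthonormal_upto p" and p: "1 \<le> p" "p \<le> K"
  shows "Om p = transpose_mat (V p) * (A * V p)"
proof -
  have "transpose_mat (V p) * V (p - 1) = 0\<^sub>m m m"
    using orthonormal_upto_orthogonal[OF orth] p by auto
  from assoc_mult_mat_eq[OF this] show ?thesis
    using Om_eq[OF p] p by (simp add: mult_minus_distrib_mat_dim minus_zero_mat_dim)
qed

lemma A_V_three_term:
  assumes "1 \<le> a" "a < K"
  shows "A * V a = V (Suc a) * G a + V (a - 1) * transpose_mat (G (a - 1)) + V a * Om a"
  unfolding V_Suc_G[OF assms] W_def using assms by (intro eq_matI) auto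

lemma V_A_V:
  assumes orth: "orthonormal_upto p" and p: "p \<le> K" and a: "1 \<le> a" "a < p"
  shows "transpose_mat (V a) * (A * V p) = transpose_mat (G a) * (transpose_mat (V (Suc a)) * V p)"
proof -
  note orthogonal = orthonormal_upto_orthogonal[OF orth _ _ _ p]
  have "transpose_mat (V a) * (A * V p) = transpose_mat (A * V a) * V p"
    using A_symmetric a p by (simp add: transpose_mult_dim assoc_mult_mat_dim[symmetric])
  also have "\<dots> = transpose_mat (G a) * (transpose_mat (V (Suc a)) * V p)"
    unfolding A_V_three_term[OF a(1) less_le_trans[OF a(2) p]]
    using a p orthogonal[of a p] orthogonal[of "a - 1" p]
    by (simp add: transpose_add_dim transpose_mult_dim add_mult_distrib_mat_dim
        assoc_mult_mat_dim right_add_zero_mat_dim)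
  finally show ?thesis .
qed

lemma V_W_orthogonal:
  assumes orth: "orthonormal_upto p" and p: "1 \<le> p" "p \<le> K" and a: "1 \<le> a" "a \<le> p"
  shows "transpose_mat (V a) * W p = 0\<^sub>m m m"
proof -
  have VW: "transpose_mat (V a) * W p = transpose_mat (V a) * (A * V p)
     - transpose_mat (V a) * V (p - 1) * transpose_mat (G (p - 1)) - transpose_mat (V a) * V p * Om p"
    unfolding W_def using p a by (simp add: mult_minus_distrib_mat_dim assoc_mult_mat_dim)
  note orthogonal = orthonormal_upto_orthogonal[OF orth _ _ _ p(2)]
  show ?thesis
  proof (cases "a = p")
    case True
    have "transpose_mat (V p) * V (p - 1) = 0\<^sub>m m m" using orthogonal[of p "p - 1"] p by auto
    then show ?thesis unfolding VW unfolding True V_orthonormal[OF p] Om_eq_VAV[OF orth p, symmetric]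
      using p by (intro eq_matI) auto
  next
    case False
    then have ap: "a < p" using a by simp
    note VAV = V_A_V[OF orth p(2) a(1) ap]
    show ?thesis
    proof (cases "Suc a = p")
      case True
      then have "transpose_mat (V (Suc a)) * V p = 1\<^sub>m m" "transpose_mat (V a) * V (p - 1) = 1\<^sub>m m"
        "transpose_mat (V a) * V p = 0\<^sub>m m m"
        using a p V_orthonormal[of p] V_orthonormal[of a] orthogonal[of a p] by auto
      then show ?thesis unfolding VW VAV using a p True by (intro eq_matI) auto
    next
      case False
      then have "transpose_mat (V (Suc a)) * V p = 0\<^sub>m m m" "transpose_mat (V a) * V (p - 1) = 0\<^sub>m m m"
        "transpose_mat (V a) * V p = 0\<^sub>m m m"
        using a p ap orthogonal[of a p] orthogonal[of "Suc a" p] orthogonal[of a "p - 1"] by auto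
      then show ?thesis unfolding VW VAV using a p ap by (intro eq_matI) auto
    qed
  qed
qed

lemma orthonormal_upto_Suc:
  assumes orth: "orthonormal_upto p" and G: "has_minv m (G p)" and p: "1 \<le> p" "Suc p \<le> K"
  shows "orthonormal_upto (Suc p)"
proof -
  note G_inv = has_minvD[OF G]
  have perp: "transpose_mat (V a) * V (Suc p) = 0\<^sub>m m m" if a: "1 \<le> a" "a \<le> p" for a
  proof -
    have "transpose_mat (V a) * V (Suc p) * G p = 0\<^sub>m m m"
      using V_W_orthogonal[OF orth _ _ a] V_Suc_G[of p] p a by (simp add: assoc_mult_mat_dim)
    then have "transpose_mat (V a) * V (Suc p) * G p * minv (G p) = 0\<^sub>m m m" using G_inv by simp
    then show ?thesis using G_inv a p by (simp add: assoc_mult_mat_dim)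
  qed
  show ?thesis unfolding orthonormal_upto_def
  proof (intro allI impI)
    fix a b assume ab: "1 \<le> a" "a \<le> Suc p" "1 \<le> b" "b \<le> Suc p"
    consider "a \<le> p" "b \<le> p" | "a = Suc p" "b = Suc p" | "a = Suc p" "b \<le> p" | "a \<le> p" "b = Suc p"
      using ab by linarith
    then show "transpose_mat (V a) * V b = (if a = b then 1\<^sub>m m else 0\<^sub>m m m)"
    proof cases
      case 1
      then show ?thesis using orth ab unfolding orthonormal_upto_def by auto
    next
      case 2
      then show ?thesis using V_orthonormal[of "Suc p"] p by simp
    next
      case 3
      then have "transpose_mat (transpose_mat (V b) * V a) = 0\<^sub>m m m" using perp ab by simp
      then show ?thesis using 3 ab p by (simp add: transpose_mult_dim)
    next
      case 4
      then show ?thesis using perp ab by simp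
    qed
  qed
qed

definition deltas_invertible :: "nat \<Rightarrow> bool" where
  "deltas_invertible p \<longleftrightarrow>
     (\<forall>i. 1 \<le> i \<longrightarrow> i \<le> p \<longrightarrow> has_minv m (Delta i) \<and> transpose_mat (Delta i) = Delta i)"

lemma deltas_invertible_mono: "deltas_invertible p \<Longrightarrow> q \<le> p \<Longrightarrow> deltas_invertible q"
  unfolding deltas_invertible_def by auto

lemma deltas_invertibleD:
  assumes "deltas_invertible p" "1 \<le> i" "i \<le> p"
  shows "has_minv m (Delta i)" "Delta i \<in> carrier_mat m m" "minv (Delta i) \<in> carrier_mat m m"
    "dim_row (Delta i) = m" "dim_col (Delta i) = m" "dim_row (minv (Delta i)) = m" "dim_col (minv (Delta i)) = m"
    "Delta i * minv (Delta i) = 1\<^sub>m m" "minv (Delta i) * Delta i = 1\<^sub>m m"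
    "transpose_mat (Delta i) = Delta i" "transpose_mat (minv (Delta i)) = minv (Delta i)"
  using assms has_minvD[of m "Delta i"] minv_symmetric[of m "Delta i"]
  unfolding deltas_invertible_def by auto

text \<open>These are the block search directions of BCG in Lanczos coordinates: \<open>P\<^sub>j = \<plusminus>U\<^sub>j \<Phi>\<^sub>j\<close>.\<close>
fun U :: "nat \<Rightarrow> real mat" where
  "U 0 = V 1"
| "U (Suc j) = V (Suc (Suc j)) - U j * minv (Delta (Suc j)) * transpose_mat (G (Suc j))"

lemma U_carrier: "deltas_invertible j \<Longrightarrow> Suc j \<le> K \<Longrightarrow> U j \<in> carrier_mat n m"
proof (induction j)
  case 0
  then show ?case using V_carrier[of 1] by simp
next
  case (Suc j)
  then have "U j \<in> carrier_mat n m" using deltas_invertible_mono by simp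
  then show ?case using Suc.prems deltas_invertibleD[OF Suc.prems(1), of "Suc j"]
    by (intro carrier_matI) auto
qed

lemma dim_U [simp]:
  "deltas_invertible j \<Longrightarrow> Suc j \<le> K \<Longrightarrow> dim_row (U j) = n"
  "deltas_invertible j \<Longrightarrow> Suc j \<le> K \<Longrightarrow> dim_col (U j) = m"
  using U_carrier by auto

lemma U_orthogonal:
  assumes X: "X \<in> carrier_mat n c"
  shows "deltas_invertible j \<Longrightarrow> Suc j \<le> K \<Longrightarrow>
    (\<And>a. 1 \<le> a \<Longrightarrow> a \<le> Suc j \<Longrightarrow> transpose_mat (V a) * X = 0\<^sub>m m c) \<Longrightarrow>
    transpose_mat (U j) * X = 0\<^sub>m m c"
proof (induction j)
  case 0
  then show ?case by simp
next
  case (Suc j)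
  have inv: "deltas_invertible j" using deltas_invertible_mono[OF Suc.prems(1)] by simp
  have "transpose_mat (U j) * X = 0\<^sub>m m c" using Suc inv by simp
  moreover have "transpose_mat (V (Suc (Suc j))) * X = 0\<^sub>m m c" using Suc.prems by simp
  ultimately show ?case using Suc.prems inv X deltas_invertibleD[OF Suc.prems(1), of "Suc j"]
    by (simp add: mat_dim_simps)
qed

lemma U_V:
  assumes inv: "deltas_invertible j" and orth: "orthonormal_upto (Suc j)" and jK: "Suc j \<le> K"
  shows "transpose_mat (U j) * V (Suc j) = 1\<^sub>m m"
proof (cases j)
  case 0
  then show ?thesis using V_orthonormal[of 1] jK by simp
next
  case (Suc i)
  have inv': "deltas_invertible i" using deltas_invertible_mono[OF inv] Suc by simp
  have "transpose_mat (U i) * V (Suc (Suc i)) = 0\<^sub>m m m"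
    using U_orthogonal[OF V_carrier[OF jK] inv'] Suc jK orthonormal_upto_orthogonal[OF orth] by simp
  then show ?thesis using Suc inv' jK V_orthonormal[of "Suc j"] deltas_invertibleD[OF inv, of j]
    by (simp add: mat_dim_simps)
qed

lemma A_U: "deltas_invertible i \<Longrightarrow> Suc i \<le> K \<Longrightarrow> A * U i = V (Suc i) * Delta (Suc i) + W (Suc i)"
proof (induction i)
  case 0
  show ?case unfolding W_def using V_0 0 by (intro eq_matI) auto
next
  case (Suc i)
  note Delta = deltas_invertibleD[OF Suc.prems(1), of "Suc i"]
  have inv: "deltas_invertible i" using deltas_invertible_mono[OF Suc.prems(1)] by simp
  have IH: "A * U i = V (Suc i) * Delta (Suc i) + W (Suc i)" using Suc inv by simp
  have W: "W (Suc i) = V (Suc (Suc i)) * G (Suc i)" using V_Suc_G[of "Suc i"] Suc.prems by simp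
  have U: "dim_row (U i) = n" "dim_col (U i) = m" using inv Suc.prems by auto
  have "A * U (Suc i) = A * V (Suc (Suc i)) - (V (Suc i) * transpose_mat (G (Suc i))
     + V (Suc (Suc i)) * (G (Suc i) * (minv (Delta (Suc i)) * transpose_mat (G (Suc i)))))"
    using Suc.prems Delta U
    by (simp add: mat_dim_simps assoc_mult_mat_eq[OF IH] W assoc_mult_mat_eq[OF Delta(8)])
  moreover have "V (Suc (Suc i)) * Delta (Suc (Suc i)) + W (Suc (Suc i)) =
     V (Suc (Suc i)) * Om (Suc (Suc i))
     - V (Suc (Suc i)) * (G (Suc i) * (minv (Delta (Suc i)) * transpose_mat (G (Suc i))))
     + ((A * V (Suc (Suc i)) - V (Suc i) * transpose_mat (G (Suc i))) - V (Suc (Suc i)) * Om (Suc (Suc i)))"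
    using Suc.prems Delta U unfolding W_def by (simp add: mat_dim_simps)
  ultimately show ?case using Suc.prems Delta U by (intro eq_matI) auto
qed

lemma U_A_U:
  assumes inv: "deltas_invertible j" and orth: "orthonormal_upto (Suc j)" and jK: "Suc j \<le> K"
  shows "transpose_mat (U j) * (A * U j) = Delta (Suc j)"
proof -
  have W: "W (Suc j) \<in> carrier_mat n m" using jK by (intro carrier_matI) auto
  have "transpose_mat (U j) * W (Suc j) = 0\<^sub>m m m"
    using U_orthogonal[OF W inv jK] V_W_orthogonal[OF orth _ jK] by simp
  then show ?thesis unfolding A_U[OF inv jK] using inv jK
    by (simp add: mat_dim_simps assoc_mult_mat_eq[OF U_V[OF inv orth jK]])
qed

lemma deltas_invertible_Suc:
  assumes inv: "deltas_invertible j" and orth: "orthonormal_upto (Suc j)" and jK: "Suc j \<le> K"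
  shows "deltas_invertible (Suc j)"
proof -
  have U: "U j \<in> carrier_mat n m" using U_carrier[OF inv jK] .
  have "transpose_mat (V (Suc j)) * U j = 1\<^sub>m m"
    using arg_cong[OF U_V[OF inv orth jK], of transpose_mat] U jK by (simp add: transpose_mult_dim)
  then have "mat_injective (U j)"
    using U jK by (intro left_inverse_imp_mat_injective) auto
  moreover have "transpose_mat (U j) * A * U j = Delta (Suc j)"
    using U_A_U[OF inv orth jK] U by (simp add: assoc_mult_mat_dim)
  ultimately have "has_minv m (Delta (Suc j))" "transpose_mat (Delta (Suc j)) = Delta (Suc j)"
    using spd_congruence_has_minv[OF spd U] congruence_symmetric[OF A_carrier A_symmetric U] by auto
  with inv show ?thesis unfolding deltas_invertible_def by (auto simp: le_Suc_eq)
qed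

end

section \<open>BCG in Lanczos coordinates\<close>

lemma bcg_R_Suc:
  "bcg_R A B X0 (Suc j) = bcg_R A B X0 j - A * bcg_P A B X0 j * bcg_Upsilon A B X0 j"
  unfolding bcg_R_def bcg_P_def bcg_Upsilon_def by (cases "bcg A B X0 j") (auto simp: Let_def)

lemma bcg_P_Suc:
  "bcg_P A B X0 (Suc j) = bcg_R A B X0 (Suc j) + bcg_P A B X0 j *
     (minv (transpose_mat (bcg_R A B X0 j) * bcg_R A B X0 j)
       * (transpose_mat (bcg_R A B X0 (Suc j)) * bcg_R A B X0 (Suc j)))"
  unfolding bcg_R_def bcg_P_def by (cases "bcg A B X0 j") (auto simp: Let_def)

lemma bcg_P_0: "bcg_P A B X0 0 = bcg_R A B X0 0"
  unfolding bcg_R_def bcg_P_def by simp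

locale bcg_lanczos = spd_block_lanczos n m "Suc k" A "bcg_R A B X0 0" V G Om
  for n m k A B X0 V G Om +
  assumes full_rank: "\<forall>j \<le> k. full_col_rank (bcg_R A B X0 j)"
begin

abbreviation "R j \<equiv> bcg_R A B X0 j"
abbreviation "P j \<equiv> bcg_P A B X0 j"
abbreviation "Upsilon j \<equiv> bcg_Upsilon A B X0 j"

definition lanczos_invariant :: "nat \<Rightarrow> bool" where
  "lanczos_invariant j \<longleftrightarrow> orthonormal_upto (Suc j) \<and> deltas_invertible (Suc j) \<and> has_minv m (Phi j) \<and>
     R j = (-1) ^ j \<cdot>\<^sub>m (V (Suc j) * Phi j) \<and> P j = (-1) ^ j \<cdot>\<^sub>m (U j * Phi j)"

lemma lanczos_invariant_0: "lanczos_invariant 0"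
proof -
  have orth: "orthonormal_upto 1" unfolding orthonormal_upto_def using V_orthonormal[of 1] by auto
  have "mat_injective (V 1 * G 0)"
    using full_col_rank_imp_mat_injective full_rank V_1_G_0 by auto
  then have "mat_injective (G 0)" by (rule mat_injective_mult_right) simp
  then have "has_minv m (G 0)" using mat_injective_imp_has_minv G_carrier[of 0] by simp
  moreover have "deltas_invertible 1"
    using deltas_invertible_Suc[of 0] orth unfolding deltas_invertible_def by auto
  ultimately show ?thesis
    unfolding lanczos_invariant_def using orth V_1_G_0 bcg_P_0 by (simp add: smult_one_mat)
qed

context
  fixes j assumes inv: "lanczos_invariant j" and jk: "j \<le> k"
begin

lemma invariant_orthonormal: "orthonormal_upto (Suc j)"
  and invariant_deltas: "deltas_invertible (Suc j)"
  and invariant_Phi: "has_minv m (Phi j)"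
  and invariant_R: "R j = (-1) ^ j \<cdot>\<^sub>m (V (Suc j) * Phi j)"
  and invariant_P: "P j = (-1) ^ j \<cdot>\<^sub>m (U j * Phi j)"
  using inv unfolding lanczos_invariant_def by auto

lemma gram_R: "transpose_mat (R j) * R j = transpose_mat (Phi j) * Phi j"
  unfolding invariant_R using V_orthonormal[of "Suc j"] jk has_minvD[OF invariant_Phi]
  by (simp add: gram_smult_mult[OF V_carrier])

lemma congruence_P: "transpose_mat (P j) * A * P j = transpose_mat (Phi j) * (Delta (Suc j) * Phi j)"
proof -
  have inv': "deltas_invertible j" using deltas_invertible_mono[OF invariant_deltas] by simp
  have "transpose_mat (P j) * A * P j = transpose_mat (Phi j) * ((transpose_mat (U j) * (A * U j)) * Phi j)"
    unfolding invariant_P using jk has_minvD[OF invariant_Phi]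
    by (intro congruence_smult_mult[OF U_carrier[OF inv'] _ A_carrier]) auto
  then show ?thesis using U_A_U[OF inv' invariant_orthonormal] jk by simp
qed

lemma Upsilon_eq: "Upsilon j = minv (Phi j) * (minv (Delta (Suc j)) * Phi j)"
  unfolding bcg_Upsilon_def congruence_P gram_R
  using minv_congruence[OF invariant_Phi deltas_invertibleD(1)[OF invariant_deltas]] by simp

lemma Theta_eq: "transpose_mat (R j) * R j * Upsilon j = transpose_mat (Phi j) * (minv (Delta (Suc j)) * Phi j)"
  unfolding Upsilon_eq gram_R using has_minvD[OF invariant_Phi] deltas_invertibleD[OF invariant_deltas, of "Suc j"]
  by (simp add: mat_dim_simps assoc_mult_mat_eq[OF has_minvD(7)[OF invariant_Phi]])

end

context
  fixes j assumes inv: "lanczos_invariant j" and jk: "Suc j \<le> k"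
begin

private lemma step_facts:
  "orthonormal_upto (Suc j)" "deltas_invertible (Suc j)" "deltas_invertible j" "has_minv m (Phi j)"
  "R j = (-1) ^ j \<cdot>\<^sub>m (V (Suc j) * Phi j)" "P j = (-1) ^ j \<cdot>\<^sub>m (U j * Phi j)"
  "Upsilon j = minv (Phi j) * (minv (Delta (Suc j)) * Phi j)"
  "transpose_mat (R j) * R j = transpose_mat (Phi j) * Phi j"
  using invariant_orthonormal[OF inv] invariant_deltas[OF inv] invariant_Phi[OF inv]
    invariant_R[OF inv] invariant_P[OF inv] Upsilon_eq[OF inv] gram_R[OF inv] jk
    deltas_invertible_mono[of "Suc j" j]
  by auto

private lemmas Phi = has_minvD[OF step_facts(4)]
private lemmas Delta = deltas_invertibleD[OF step_facts(2), of "Suc j", simplified]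

lemma Phi_Suc_eq: "Phi (Suc j) = G (Suc j) * (minv (Delta (Suc j)) * Phi j)"
  using Phi Delta jk by (simp add: lanczos_Pi_def assoc_mult_mat_dim)

lemma R_Suc_eq: "R (Suc j) = (-1) ^ Suc j \<cdot>\<^sub>m (V (Suc (Suc j)) * Phi (Suc j))"
proof -
  have U: "dim_row (U j) = n" "dim_col (U j) = m" using step_facts(3) jk by auto
  have AU: "A * U j = V (Suc j) * Delta (Suc j) + V (Suc (Suc j)) * G (Suc j)"
    using A_U[OF step_facts(3)] V_Suc_G[of "Suc j"] jk by simp
  have "R (Suc j) = (-1) ^ j \<cdot>\<^sub>m (V (Suc j) * Phi j)
      - (-1) ^ j \<cdot>\<^sub>m (V (Suc j) * Phi j + V (Suc (Suc j)) * (G (Suc j) * (minv (Delta (Suc j)) * Phi j)))"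
    unfolding bcg_R_Suc step_facts(5-7) using Phi Delta U jk
    by (simp add: mat_dim_simps assoc_mult_mat_eq[OF Phi(7)] assoc_mult_mat_eq[OF AU]
        assoc_mult_mat_eq[OF Delta(8)])
  also have "\<dots> = (- ((-1) ^ j)) \<cdot>\<^sub>m (V (Suc (Suc j)) * (G (Suc j) * (minv (Delta (Suc j)) * Phi j)))"
    using Phi Delta jk by (intro smult_minus_smult_add_mat) auto
  finally show ?thesis unfolding Phi_Suc_eq by simp
qed

lemma Phi_Suc_has_minv: "has_minv m (Phi (Suc j))"
proof (rule mat_injective_imp_has_minv)
  show Phi_carrier: "Phi (Suc j) \<in> carrier_mat m m"
    unfolding Phi_Suc_eq using Phi Delta jk by (intro carrier_matI) auto
  have "mat_injective ((-1) ^ Suc j \<cdot>\<^sub>m (V (Suc (Suc j)) * Phi (Suc j)))"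
    using full_col_rank_imp_mat_injective full_rank jk R_Suc_eq by (metis Suc_leD le_SucI order_refl)
  then have "mat_injective (V (Suc (Suc j)) * Phi (Suc j))" by (rule mat_injective_smult) simp
  then show "mat_injective (Phi (Suc j))"
    by (rule mat_injective_mult_right) (use jk Phi_carrier in \<open>simp del: lanczos_Phi.simps\<close>)
qed

lemma G_Suc_has_minv: "has_minv m (G (Suc j))"
proof (rule right_inverse_imp_has_minv)
  note Phi' = has_minvD[OF Phi_Suc_has_minv]
  show "G (Suc j) \<in> carrier_mat m m" using G_carrier jk by simp
  show "minv (Delta (Suc j)) * Phi j * minv (Phi (Suc j)) \<in> carrier_mat m m"
    using Phi Delta Phi' by auto
  have "G (Suc j) * (minv (Delta (Suc j)) * Phi j * minv (Phi (Suc j)))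
      = G (Suc j) * (minv (Delta (Suc j)) * Phi j) * minv (Phi (Suc j))"
    using Phi Delta Phi' jk by (simp add: assoc_mult_mat_dim)
  then show "G (Suc j) * (minv (Delta (Suc j)) * Phi j * minv (Phi (Suc j))) = 1\<^sub>m m"
    using Phi' by (simp add: Phi_Suc_eq[symmetric])
qed

lemma gram_R_Suc: "transpose_mat (R (Suc j)) * R (Suc j) = transpose_mat (Phi (Suc j)) * Phi (Suc j)"
  unfolding R_Suc_eq using V_orthonormal[of "Suc (Suc j)"] jk has_minvD[OF Phi_Suc_has_minv]
  by (simp add: gram_smult_mult[OF V_carrier])

lemma transpose_Phi_Suc:
  "transpose_mat (Phi (Suc j)) = transpose_mat (Phi j) * (minv (Delta (Suc j)) * transpose_mat (G (Suc j)))"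
  unfolding Phi_Suc_eq using Phi Delta jk by (simp add: mat_dim_simps)

lemma P_Suc_eq: "P (Suc j) = (-1) ^ Suc j \<cdot>\<^sub>m (U (Suc j) * Phi (Suc j))"
proof -
  note Phi' = has_minvD[OF Phi_Suc_has_minv]
  have U: "dim_row (U j) = n" "dim_col (U j) = m" using step_facts(3) jk by auto
  have Phi_transpose_inv: "transpose_mat (minv (Phi j)) * transpose_mat (Phi j) = 1\<^sub>m m"
    using Phi by (simp add: transpose_mult_dim[symmetric])
  have "P (Suc j) = (- ((-1) ^ j)) \<cdot>\<^sub>m (V (Suc (Suc j)) * Phi (Suc j))
      + (-1) ^ j \<cdot>\<^sub>m (U j * (minv (Delta (Suc j)) * (transpose_mat (G (Suc j)) * Phi (Suc j))))"
    unfolding bcg_P_Suc step_facts(8) gram_R_Suc minv_gram[OF step_facts(4)] unfolding R_Suc_eq step_facts(6)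
    using Phi Delta jk U Phi'
    by (simp del: lanczos_Phi.simps add: mat_dim_simps transpose_Phi_Suc assoc_mult_mat_eq[OF Phi(7)]
        assoc_mult_mat_eq[OF Phi_transpose_inv])
  also have "\<dots> = (- ((-1) ^ j)) \<cdot>\<^sub>m (V (Suc (Suc j)) * Phi (Suc j)
      - U j * (minv (Delta (Suc j)) * (transpose_mat (G (Suc j)) * Phi (Suc j))))"
    using Phi Delta jk U Phi' by (intro uminus_smult_add_smult_mat) auto
  also have "V (Suc (Suc j)) * Phi (Suc j) - U j * (minv (Delta (Suc j)) * (transpose_mat (G (Suc j)) * Phi (Suc j)))
      = U (Suc j) * Phi (Suc j)"
    using Phi Delta jk U Phi' by (simp del: lanczos_Phi.simps add: mat_dim_simps)
  finally show ?thesis by simp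
qed

lemma lanczos_invariant_Suc: "lanczos_invariant (Suc j)"
proof -
  have orth: "orthonormal_upto (Suc (Suc j))"
    using orthonormal_upto_Suc[OF step_facts(1) G_Suc_has_minv] jk by simp
  then have "deltas_invertible (Suc (Suc j))"
    using deltas_invertible_Suc[OF step_facts(2)] jk by simp
  then show ?thesis
    unfolding lanczos_invariant_def using orth Phi_Suc_has_minv R_Suc_eq P_Suc_eq by blast
qed

end

lemma lanczos_invariant_upto: "j \<le> k \<Longrightarrow> lanczos_invariant j"
  by (induction j) (auto simp: lanczos_invariant_0 lanczos_invariant_Suc)

end

section \<open>Inverting a 2 x 2 block matrix by its Schur complement\<close>

locale schur_complement =
  fixes N p :: nat and T C Q :: "real mat"
  assumes T: "has_minv N T" and C: "C \<in> carrier_mat N p" and Q: "Q \<in> carrier_mat p p"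
    and complement: "has_minv p (Q - transpose_mat C * (minv T * C))"
begin

definition schur :: "real mat" where "schur = Q - transpose_mat C * (minv T * C)"

abbreviation "Tinv \<equiv> minv T"
abbreviation "Dinv \<equiv> minv schur"

lemma schur_has_minv: "has_minv p schur"
  using complement unfolding schur_def .

lemma dims:
  "dim_row T = N" "dim_col T = N" "dim_row Tinv = N" "dim_col Tinv = N" "dim_row C = N" "dim_col C = p"
  "dim_row Q = p" "dim_col Q = p" "dim_row schur = p" "dim_col schur = p" "dim_row Dinv = p" "dim_col Dinv = p"
  using has_minvD[OF T] has_minvD[OF schur_has_minv] C Q by auto

lemma T_Tinv_mult: "dim_row X = N \<Longrightarrow> T * (Tinv * X) = X"
  using assoc_mult_mat_eq[OF has_minvD(7)[OF T]] dims by simp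

lemma schur_Dinv_mult:
  assumes "dim_row X = p" shows "schur * (Dinv * X) = X"
proof -
  have "schur * (Dinv * X) = (schur * Dinv) * X" using dims assms by (simp add: assoc_mult_mat_dim)
  also have "\<dots> = X" using has_minvD(7)[OF schur_has_minv] assms by simp
  finally show ?thesis .
qed

lemma C_Tinv_C_mult: "dim_row X = p \<Longrightarrow> transpose_mat C * (Tinv * (C * X)) = Q * X - schur * X"
proof -
  assume X: "dim_row X = p"
  have "transpose_mat C * (Tinv * C) = Q - schur"
    unfolding schur_def using dims by (intro eq_matI) auto
  from assoc_mult_mat_eq3[OF this] show ?thesis
    using X dims by (simp add: minus_mult_distrib_mat_dim)
qed

lemma inverse_top_left:
  "T * (Tinv + Tinv * (C * (Dinv * (transpose_mat C * Tinv)))) + C * ((-1) \<cdot>\<^sub>m (Dinv * (transpose_mat C * Tinv))) = 1\<^sub>m N"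
proof -
  have "T * (Tinv + Tinv * (C * (Dinv * (transpose_mat C * Tinv)))) + C * ((-1) \<cdot>\<^sub>m (Dinv * (transpose_mat C * Tinv)))
      = 1\<^sub>m N + C * (Dinv * (transpose_mat C * Tinv)) + (-1) \<cdot>\<^sub>m (C * (Dinv * (transpose_mat C * Tinv)))"
    using dims has_minvD[OF T] by (simp add: mat_dim_simps T_Tinv_mult)
  also have "\<dots> = 1\<^sub>m N" using dims by (intro eq_matI) auto
  finally show ?thesis .
qed

lemma inverse_top_right: "T * ((-1) \<cdot>\<^sub>m (Tinv * (C * Dinv))) + C * Dinv = 0\<^sub>m N p"
proof -
  have "T * ((-1) \<cdot>\<^sub>m (Tinv * (C * Dinv))) + C * Dinv = (-1) \<cdot>\<^sub>m (C * Dinv) + C * Dinv"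
    using dims by (simp add: mat_dim_simps T_Tinv_mult)
  also have "\<dots> = 0\<^sub>m N p" using dims by (intro eq_matI) auto
  finally show ?thesis .
qed

lemma inverse_bottom_left:
  "transpose_mat C * (Tinv + Tinv * (C * (Dinv * (transpose_mat C * Tinv)))) + Q * ((-1) \<cdot>\<^sub>m (Dinv * (transpose_mat C * Tinv)))
   = 0\<^sub>m p N"
proof -
  have "transpose_mat C * (Tinv + Tinv * (C * (Dinv * (transpose_mat C * Tinv)))) + Q * ((-1) \<cdot>\<^sub>m (Dinv * (transpose_mat C * Tinv)))
      = transpose_mat C * Tinv + (Q * (Dinv * (transpose_mat C * Tinv)) - transpose_mat C * Tinv)
        + (-1) \<cdot>\<^sub>m (Q * (Dinv * (transpose_mat C * Tinv)))"
    using dims by (simp add: mat_dim_simps C_Tinv_C_mult schur_Dinv_mult)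
  also have "\<dots> = 0\<^sub>m p N" using dims by (intro eq_matI) auto
  finally show ?thesis .
qed

lemma inverse_bottom_right: "transpose_mat C * ((-1) \<cdot>\<^sub>m (Tinv * (C * Dinv))) + Q * Dinv = 1\<^sub>m p"
proof -
  have "transpose_mat C * ((-1) \<cdot>\<^sub>m (Tinv * (C * Dinv))) + Q * Dinv = (-1) \<cdot>\<^sub>m (Q * Dinv - 1\<^sub>m p) + Q * Dinv"
    using dims has_minvD[OF schur_has_minv] by (simp add: mat_dim_simps C_Tinv_C_mult)
  also have "\<dots> = 1\<^sub>m p" using dims by (intro eq_matI) auto
  finally show ?thesis .
qed

lemma four_block_inverse:
  defines "M \<equiv> four_block_mat T C (transpose_mat C) Q"
  shows "has_minv (N + p) M"
    "minv M = four_block_mat (Tinv + Tinv * (C * (Dinv * (transpose_mat C * Tinv)))) ((-1) \<cdot>\<^sub>m (Tinv * (C * Dinv)))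
       ((-1) \<cdot>\<^sub>m (Dinv * (transpose_mat C * Tinv))) Dinv"
proof -
  let ?M' = "four_block_mat (Tinv + Tinv * (C * (Dinv * (transpose_mat C * Tinv)))) ((-1) \<cdot>\<^sub>m (Tinv * (C * Dinv)))
       ((-1) \<cdot>\<^sub>m (Dinv * (transpose_mat C * Tinv))) Dinv"
  have "M * ?M' = four_block_mat (1\<^sub>m N) (0\<^sub>m N p) (0\<^sub>m p N) (1\<^sub>m p)"
    unfolding M_def inverse_top_left[symmetric] inverse_top_right[symmetric]
      inverse_bottom_left[symmetric] inverse_bottom_right[symmetric]
    by (rule mult_four_block_mat; rule carrier_matI) (simp_all add: dims)
  then have "M * ?M' = 1\<^sub>m (N + p)" by simp
  moreover have "M \<in> carrier_mat (N + p) (N + p)" "?M' \<in> carrier_mat (N + p) (N + p)"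
    unfolding M_def by (rule carrier_matI; simp add: dims)+
  ultimately show "has_minv (N + p) M" "minv M = ?M'"
    using right_inverse_imp_has_minv by blast+
qed

end


text \<open>The \<open>(N m) \<times> m\<close> matrix \<open>E\<^sub>i\<^sub>+\<^sub>1 = e\<^sub>i\<^sub>+\<^sub>1 \<otimes> I\<^sub>m\<close>: block indices start at 0 here, at 1 in the paper.\<close>
definition block_unit :: "nat \<Rightarrow> nat \<Rightarrow> nat \<Rightarrow> real mat" where
  "block_unit m N i = mat (N * m) m (\<lambda>(r, b). if r = i * m + b then 1 else 0)"

lemma dim_block_unit [simp]: "dim_row (block_unit m N i) = N * m" "dim_col (block_unit m N i) = m"
  unfolding block_unit_def by auto

lemma block_unit_carrier: "block_unit m N i \<in> carrier_mat (N * m) m"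
  by (rule carrier_matI) auto

lemma block_index_less: "i < N \<Longrightarrow> a < m \<Longrightarrow> i * m + a < N * (m :: nat)"
proof -
  assume "i < N" "a < m"
  then have "i * m + a < Suc i * m" by simp
  also have "\<dots> \<le> N * m" using \<open>i < N\<close> by (intro mult_le_mono1) simp
  finally show ?thesis .
qed

lemma block_index_less_iff: "a < m \<Longrightarrow> i * m + a < N * m \<longleftrightarrow> i < (N :: nat)"
  using block_index_less[of i N a m] by (auto simp: mult_less_cancel2 dest: add_lessD1)

lemma block_index_eq_iff: "a < m \<Longrightarrow> b < m \<Longrightarrow> i * m + a = j * m + b \<longleftrightarrow> i = j \<and> a = (b :: nat)"
proof
  assume "a < m" "b < m" "i * m + a = j * m + b"
  then have "(i * m + a) div m = (j * m + b) div m" "(i * m + a) mod m = (j * m + b) mod m" by simp_all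
  with \<open>a < m\<close> \<open>b < m\<close> show "i = j \<and> a = b" by simp
qed simp

lemma sum_indicator_mult: "x < (n :: nat) \<Longrightarrow> (\<Sum>r = 0..<n. (if r = x then 1 else 0) * (f r :: real)) = f x"
  by (simp add: if_distrib[of "\<lambda>c. c * _"] sum.delta cong: if_cong)

lemma transpose_block_unit_mult:
  assumes M: "M \<in> carrier_mat (N * m) c" and i: "i < N"
  shows "transpose_mat (block_unit m N i) * M = mat m c (\<lambda>(a, b). M $$ (i * m + a, b))"
proof (rule eq_matI)
  fix a b assume "a < dim_row (mat m c (\<lambda>(a, b). M $$ (i * m + a, b)))"
    "b < dim_col (mat m c (\<lambda>(a, b). M $$ (i * m + a, b)))"
  then have a: "a < m" and b: "b < c" by auto
  have "(transpose_mat (block_unit m N i) * M) $$ (a, b)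
      = (\<Sum>r = 0..<N * m. (if r = i * m + a then 1 else 0) * M $$ (r, b))"
    using M a b unfolding block_unit_def by (simp add: scalar_prod_def)
  also have "\<dots> = M $$ (i * m + a, b)" using sum_indicator_mult[OF block_index_less[OF i a]] .
  finally show "(transpose_mat (block_unit m N i) * M) $$ (a, b) = mat m c (\<lambda>(a, b). M $$ (i * m + a, b)) $$ (a, b)"
    using a b by simp
qed (use M in auto)

lemma mult_block_unit:
  assumes M: "M \<in> carrier_mat r (N * m)" and j: "j < N"
  shows "M * block_unit m N j = mat r m (\<lambda>(a, b). M $$ (a, j * m + b))"
proof -
  have "M * block_unit m N j = transpose_mat (transpose_mat (block_unit m N j) * transpose_mat M)"
    using M block_unit_carrier[of m N j] by (simp add: transpose_mult_dim)
  also have "\<dots> = transpose_mat (mat m r (\<lambda>(a, b). transpose_mat M $$ (j * m + a, b)))"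
    using transpose_block_unit_mult[of "transpose_mat M" N m r j] M j by simp
  also have "\<dots> = mat r m (\<lambda>(a, b). M $$ (a, j * m + b))"
    using M j block_index_less[OF j] by (intro eq_matI) auto
  finally show ?thesis .
qed

lemma block_unit_mult_entry:
  assumes X: "X \<in> carrier_mat m c" and "i < N" "a < m" "b < c"
  shows "(block_unit m N k * X) $$ (i * m + a, b) = (if i = k then X $$ (a, b) else 0)"
proof -
  have "(block_unit m N k * X) $$ (i * m + a, b) = transpose_mat (transpose_mat X * transpose_mat (block_unit m N k)) $$ (i * m + a, b)"
    using X by (simp add: transpose_mult_dim)
  also have "\<dots> = (transpose_mat X * transpose_mat (block_unit m N k)) $$ (b, i * m + a)"
    using assms block_index_less by simp
  also have "\<dots> = (\<Sum>t = 0..<m. (if t = a \<and> i = k then 1 else 0) * X $$ (t, b))"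
    using assms block_index_less[of i N a m] unfolding block_unit_def
    by (auto simp: scalar_prod_def block_index_eq_iff mult.commute intro!: sum.cong)
  also have "\<dots> = (if i = k then X $$ (a, b) else 0)"
    using sum_indicator_mult[OF \<open>a < m\<close>, of "\<lambda>t. X $$ (t, b)"] by auto
  finally show ?thesis .
qed

lemma block_unit_block:
  assumes M: "M \<in> carrier_mat (N * m) (N * m)" and i: "i < N" and j: "j < N"
  shows "transpose_mat (block_unit m N i) * (M * block_unit m N j) = mat m m (\<lambda>(a, b). M $$ (i * m + a, j * m + b))"
proof -
  have "M * block_unit m N j \<in> carrier_mat (N * m) m" using M by (intro carrier_matI) auto
  from transpose_block_unit_mult[OF this i] show ?thesis
    unfolding mult_block_unit[OF M j] using block_index_less[OF i] by (auto intro!: eq_matI)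
qed

lemma block11_eq_block_unit:
  assumes "M \<in> carrier_mat (N * m) (N * m)" and "1 \<le> N"
  shows "block11 m M = transpose_mat (block_unit m N 0) * (M * block_unit m N 0)"
  using block_unit_block[OF assms(1), of 0 0] assms(2) unfolding block11_def by simp

lemma block_unit_1: "block_unit m 1 0 = 1\<^sub>m m"
  unfolding block_unit_def by (intro eq_matI) auto

lemma four_block_mat_blocks:
  assumes A: "A \<in> carrier_mat (N * m) (N * m)" and B: "B \<in> carrier_mat (N * m) m"
    and C: "C \<in> carrier_mat m (N * m)" and D: "D \<in> carrier_mat m m"
  defines "E \<equiv> block_unit m (Suc N)" and "F \<equiv> four_block_mat A B C D"
  shows "i < N \<Longrightarrow> j < N \<Longrightarrow> transpose_mat (E i) * (F * E j) = transpose_mat (block_unit m N i) * (A * block_unit m N j)"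
    "i < N \<Longrightarrow> transpose_mat (E i) * (F * E N) = transpose_mat (block_unit m N i) * B"
    "j < N \<Longrightarrow> transpose_mat (E N) * (F * E j) = C * block_unit m N j"
    "transpose_mat (E N) * (F * E N) = D"
proof -
  have F: "F \<in> carrier_mat (Suc N * m) (Suc N * m)"
    unfolding F_def using A D by (intro carrier_matI) auto
  note blocks = block_unit_block[OF F, folded E_def]
  have dims: "dim_row A = N * m" "dim_col A = N * m" "dim_row D = m" "dim_col D = m" using A D by auto
  have less: "i < Suc N \<Longrightarrow> a < m \<Longrightarrow> i * m + a < N * m + m" for i a
    using block_index_less[of i "Suc N" a m] by simp
  show "i < N \<Longrightarrow> j < N \<Longrightarrow> transpose_mat (E i) * (F * E j) = transpose_mat (block_unit m N i) * (A * block_unit m N j)"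
    unfolding block_unit_block[OF A] using blocks dims unfolding F_def
    by (intro eq_matI) (auto simp: block_index_less less)
  show "i < N \<Longrightarrow> transpose_mat (E i) * (F * E N) = transpose_mat (block_unit m N i) * B"
    unfolding transpose_block_unit_mult[OF B] using blocks dims B unfolding F_def
    by (intro eq_matI) (auto simp: block_index_less less)
  show "j < N \<Longrightarrow> transpose_mat (E N) * (F * E j) = C * block_unit m N j"
    unfolding mult_block_unit[OF C] using blocks dims C unfolding F_def
    by (intro eq_matI) (auto simp: block_index_less less)
  show "transpose_mat (E N) * (F * E N) = D"
    using blocks dims unfolding F_def by (intro eq_matI) (auto simp: block_index_less less)
qed


lemma dim_lanczos_T [simp]:
  "dim_row (lanczos_T m Om G N) = N * m" "dim_col (lanczos_T m Om G N) = N * m"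
  unfolding lanczos_T_def by auto

lemma lanczos_T_entry:
  assumes "i < N" "j < N" "a < m" "b < m"
  shows "lanczos_T m Om G N $$ (i * m + a, j * m + b) =
    (if i = j then Om (Suc i) $$ (a, b) else if i = Suc j then G (Suc j) $$ (a, b)
     else if j = Suc i then G (Suc i) $$ (b, a) else 0)"
  using assms block_index_less[of i N a m] block_index_less[of j N b m]
  unfolding lanczos_T_def by (simp add: Let_def add.assoc)

lemma lanczos_T_1: "Om 1 \<in> carrier_mat m m \<Longrightarrow> lanczos_T m Om G 1 = Om 1"
  unfolding lanczos_T_def by (intro eq_matI) auto

definition lanczos_coupling :: "nat \<Rightarrow> (nat \<Rightarrow> real mat) \<Rightarrow> nat \<Rightarrow> real mat" where
  "lanczos_coupling m G N = block_unit m N (N - 1) * transpose_mat (G N)"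

lemma lanczos_coupling_carrier: "G N \<in> carrier_mat m m \<Longrightarrow> lanczos_coupling m G N \<in> carrier_mat (N * m) m"
  unfolding lanczos_coupling_def by (intro carrier_matI) auto

lemma lanczos_coupling_entry:
  assumes "G N \<in> carrier_mat m m" "i < N" "a < m" "b < m"
  shows "lanczos_coupling m G N $$ (i * m + a, b) = (if i = N - 1 then G N $$ (b, a) else 0)"
  unfolding lanczos_coupling_def using block_unit_mult_entry[of "transpose_mat (G N)" m m i N a b] assms
  by auto

lemma lanczos_T_Suc:
  assumes N: "1 \<le> N" and G: "G N \<in> carrier_mat m m" and Om: "Om (Suc N) \<in> carrier_mat m m"
  shows "lanczos_T m Om G (Suc N) = four_block_mat (lanczos_T m Om G N) (lanczos_coupling m G N)
     (transpose_mat (lanczos_coupling m G N)) (Om (Suc N))"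
    (is "_ = ?F")
proof (rule eq_matI)
  have C: "lanczos_coupling m G N \<in> carrier_mat (N * m) m" using lanczos_coupling_carrier[of G N m, OF G] .
  note C_entry = lanczos_coupling_entry[of G N m, OF G]
  fix r c assume "r < dim_row ?F" "c < dim_col ?F"
  then have r: "r < Suc N * m" and c: "c < Suc N * m" using C Om by auto
  then have m: "0 < m" by (cases m) auto
  define i a j b where "i = r div m" and "a = r mod m" and "j = c div m" and "b = c mod m"
  have idx: "r = i * m + a" "c = j * m + b" "a < m" "b < m" "i < Suc N" "j < Suc N"
    unfolding i_def a_def j_def b_def using m r c by (auto simp: less_mult_imp_div_less)
  have less_N: "i * m + a < N * m \<longleftrightarrow> i < N" "j * m + b < N * m \<longleftrightarrow> j < N"
    using idx block_index_less_iff by auto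
  have N_m: "N * m + x - N * m = x" for x :: nat by simp
  consider "i < N" "j < N" | "i < N" "j = N" | "i = N" "j < N" | "i = N" "j = N"
    using idx by linarith
  then show "lanczos_T m Om G (Suc N) $$ (r, c) = ?F $$ (r, c)"
  proof cases
    case 1
    then show ?thesis unfolding idx(1,2) using idx less_N C Om
      by (simp add: lanczos_T_entry)
  next
    case 2
    then show ?thesis unfolding idx(1,2) using idx less_N C Om N
      by (auto simp: lanczos_T_entry C_entry)
  next
    case 3
    then show ?thesis unfolding idx(1,2) using idx less_N C Om N
      by (auto simp: lanczos_T_entry C_entry N_m)
  next
    case 4
    then show ?thesis unfolding idx(1,2) using idx less_N C Om
      by (simp add: lanczos_T_entry N_m)
  qed
qed (use lanczos_coupling_carrier[of G N m, OF G] Om in auto)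


section \<open>The (1,1) block of the inverse of T\<close>

fun lanczos_Psi :: "nat \<Rightarrow> (nat \<Rightarrow> real mat) \<Rightarrow> (nat \<Rightarrow> real mat) \<Rightarrow> nat \<Rightarrow> real mat" where
  "lanczos_Psi m Om G 0 = 1\<^sub>m m"
| "lanczos_Psi m Om G (Suc j) = lanczos_Pi Om G (Suc j) * lanczos_Psi m Om G j"

locale block_tridiagonal =
  fixes m K :: nat and Om G :: "nat \<Rightarrow> real mat"
  assumes Om_carrier: "\<And>i. 1 \<le> i \<Longrightarrow> i \<le> K \<Longrightarrow> Om i \<in> carrier_mat m m"
    and G_carrier: "\<And>i. 1 \<le> i \<Longrightarrow> i < K \<Longrightarrow> G i \<in> carrier_mat m m"
    and Delta_invertible: "\<And>i. 1 \<le> i \<Longrightarrow> i \<le> K \<Longrightarrow>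
      has_minv m (lanczos_Delta Om G i) \<and> transpose_mat (lanczos_Delta Om G i) = lanczos_Delta Om G i"
begin

abbreviation "Delta j \<equiv> lanczos_Delta Om G j"
abbreviation "Psi j \<equiv> lanczos_Psi m Om G j"
abbreviation "TT N \<equiv> lanczos_T m Om G N"
abbreviation "block N i j M \<equiv> transpose_mat (block_unit m N i) * (M * block_unit m N j)"

lemma Delta:
  assumes "1 \<le> i" "i \<le> K"
  shows "has_minv m (Delta i)" "dim_row (Delta i) = m" "dim_col (Delta i) = m"
    "dim_row (minv (Delta i)) = m" "dim_col (minv (Delta i)) = m"
    "Delta i * minv (Delta i) = 1\<^sub>m m" "minv (Delta i) * Delta i = 1\<^sub>m m"
    "transpose_mat (Delta i) = Delta i" "transpose_mat (minv (Delta i)) = minv (Delta i)"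
  using Delta_invertible[OF assms] has_minvD[of m "Delta i"] minv_symmetric[of m "Delta i"] by auto

lemma Psi_carrier: "j < K \<Longrightarrow> Psi j \<in> carrier_mat m m"
proof (induction j)
  case (Suc j)
  then show ?case using G_carrier[of "Suc j"] Delta[of "Suc j"]
    by (intro carrier_matI) (auto simp: lanczos_Pi_def)
qed simp

text \<open>The last block column and row of \<open>T\<^sub>N\<^sup>-\<^sup>1\<close>: exactly what the Schur complement update of \<open>T\<^sub>N\<close> to \<open>T\<^sub>N\<^sub>+\<^sub>1\<close> needs.\<close>
definition inverse_last_blocks :: "nat \<Rightarrow> bool" where
  "inverse_last_blocks N \<longleftrightarrow> has_minv (N * m) (TT N) \<and>
     block N (N - 1) (N - 1) (minv (TT N)) = minv (Delta N) \<and>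
     block N 0 (N - 1) (minv (TT N)) = (-1) ^ (N - 1) \<cdot>\<^sub>m (transpose_mat (Psi (N - 1)) * minv (Delta N)) \<and>
     block N (N - 1) 0 (minv (TT N)) = (-1) ^ (N - 1) \<cdot>\<^sub>m (minv (Delta N) * Psi (N - 1))"

lemma inverse_last_blocks_1:
  assumes "1 \<le> K" shows "inverse_last_blocks 1"
proof -
  have "TT 1 = Delta 1" using lanczos_T_1[of Om m G] Om_carrier[of 1] assms by simp
  then show ?thesis
    unfolding inverse_last_blocks_def using Delta[of 1] assms
    by (simp add: smult_one_mat block_unit_1[unfolded One_nat_def])
qed

context
  fixes j assumes inv: "inverse_last_blocks (Suc j)" and jK: "Suc (Suc j) \<le> K"
begin

private abbreviation "S \<equiv> minv (TT (Suc j))"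
private abbreviation "C \<equiv> lanczos_coupling m G (Suc j)"
private abbreviation "E0 \<equiv> block_unit m (Suc j) 0"
private abbreviation "E \<equiv> block_unit m (Suc j) j"

private lemma inverse_facts:
  "has_minv (Suc j * m) (TT (Suc j))" "transpose_mat E * (S * E) = minv (Delta (Suc j))"
  "transpose_mat E0 * (S * E) = (-1) ^ j \<cdot>\<^sub>m (transpose_mat (Psi j) * minv (Delta (Suc j)))"
  "transpose_mat E * (S * E0) = (-1) ^ j \<cdot>\<^sub>m (minv (Delta (Suc j)) * Psi j)"
  "C = E * transpose_mat (G (Suc j))"
  "G (Suc j) \<in> carrier_mat m m" "C \<in> carrier_mat (Suc j * m) m" "Psi j \<in> carrier_mat m m"
  using inv jK G_carrier[of "Suc j"] lanczos_coupling_carrier[of G "Suc j" m] Psi_carrier[of j]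
  unfolding inverse_last_blocks_def lanczos_coupling_def by auto

private lemmas S = has_minvD[OF inverse_facts(1)]
private lemmas Delta_j = Delta[of "Suc j", simplified, OF Suc_leD[OF jK]]

lemma Psi_Suc_eq: "Psi (Suc j) = G (Suc j) * (minv (Delta (Suc j)) * Psi j)"
  using Delta_j inverse_facts by (simp add: lanczos_Pi_def assoc_mult_mat_dim)

lemma coupling_transpose: "transpose_mat C = G (Suc j) * transpose_mat E"
  using inverse_facts by (simp add: transpose_mult_dim)

lemma schur_eq_Delta: "Om (Suc (Suc j)) - transpose_mat C * (S * C) = Delta (Suc (Suc j))"
proof -
  have "transpose_mat C * (S * C) = G (Suc j) * (minv (Delta (Suc j)) * transpose_mat (G (Suc j)))"
    unfolding coupling_transpose unfolding inverse_facts(5) using S Delta_j inverse_facts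
    by (simp add: mat_dim_simps assoc_mult_mat_eq3[OF inverse_facts(2)])
  then show ?thesis using Delta_j inverse_facts by (simp add: assoc_mult_mat_dim)
qed

lemma first_block_row_coupling: "transpose_mat E0 * (S * C) = (-1) ^ j \<cdot>\<^sub>m transpose_mat (Psi (Suc j))"
  unfolding inverse_facts(5) Psi_Suc_eq using S Delta_j inverse_facts
  by (simp add: mat_dim_simps assoc_mult_mat_eq3[OF inverse_facts(3)])

lemma coupling_first_block_col: "transpose_mat C * (S * E0) = (-1) ^ j \<cdot>\<^sub>m Psi (Suc j)"
  unfolding coupling_transpose Psi_Suc_eq using S Delta_j inverse_facts
  by (simp add: mat_dim_simps assoc_mult_mat_eq[OF inverse_facts(4)])

lemma minv_TT_Suc:
  "has_minv (Suc (Suc j) * m) (TT (Suc (Suc j)))"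
  "minv (TT (Suc (Suc j))) = four_block_mat
     (S + S * (C * (minv (Delta (Suc (Suc j))) * (transpose_mat C * S))))
     ((-1) \<cdot>\<^sub>m (S * (C * minv (Delta (Suc (Suc j))))))
     ((-1) \<cdot>\<^sub>m (minv (Delta (Suc (Suc j))) * (transpose_mat C * S)))
     (minv (Delta (Suc (Suc j))))"
proof -
  interpret schur_complement "Suc j * m" m "TT (Suc j)" C "Om (Suc (Suc j))"
    using inverse_facts(1,7) Om_carrier[of "Suc (Suc j)"] jK Delta[of "Suc (Suc j)"] schur_eq_Delta
    by unfold_locales auto
  have split: "TT (Suc (Suc j)) = four_block_mat (TT (Suc j)) C (transpose_mat C) (Om (Suc (Suc j)))"
    using lanczos_T_Suc[of "Suc j" G m Om] inverse_facts(6) Om_carrier[of "Suc (Suc j)"] jK by simp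
  have "schur = Delta (Suc (Suc j))" unfolding schur_def using schur_eq_Delta .
  then show "has_minv (Suc (Suc j) * m) (TT (Suc (Suc j)))" "minv (TT (Suc (Suc j))) = four_block_mat
     (S + S * (C * (minv (Delta (Suc (Suc j))) * (transpose_mat C * S))))
     ((-1) \<cdot>\<^sub>m (S * (C * minv (Delta (Suc (Suc j))))))
     ((-1) \<cdot>\<^sub>m (minv (Delta (Suc (Suc j))) * (transpose_mat C * S)))
     (minv (Delta (Suc (Suc j))))"
    using four_block_inverse unfolding split by (simp_all add: add.commute)
qed

lemma inverse_blocks_Suc:
  "inverse_last_blocks (Suc (Suc j))"
  "block (Suc (Suc j)) 0 0 (minv (TT (Suc (Suc j))))
     = block (Suc j) 0 0 S + transpose_mat (Psi (Suc j)) * (minv (Delta (Suc (Suc j))) * Psi (Suc j))"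
proof -
  define Di where "Di = minv (Delta (Suc (Suc j)))"
  have Di: "Di \<in> carrier_mat m m" unfolding Di_def using Delta[of "Suc (Suc j)"] jK by auto
  have Psi': "Psi (Suc j) \<in> carrier_mat m m" using Psi_carrier[of "Suc j"] jK by simp
  have S': "S \<in> carrier_mat (Suc j * m) (Suc j * m)" using S by simp
  note carriers = S' inverse_facts(7) Di Psi'
  have "S + S * (C * (Di * (transpose_mat C * S))) \<in> carrier_mat (Suc j * m) (Suc j * m)"
    "(-1) \<cdot>\<^sub>m (S * (C * Di)) \<in> carrier_mat (Suc j * m) m"
    "(-1) \<cdot>\<^sub>m (Di * (transpose_mat C * S)) \<in> carrier_mat m (Suc j * m)"
    using carriers by auto
  note blocks = four_block_mat_blocks[OF this Di, folded minv_TT_Suc(2)[folded Di_def]]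
  have row_Di: "transpose_mat E0 * (S * (C * X)) = ((-1) ^ j \<cdot>\<^sub>m transpose_mat (Psi (Suc j))) * X"
    if "dim_row X = m" for X
    by (rule assoc_mult_mat_eq3[OF first_block_row_coupling]) (use carriers that in auto)
  have top_right: "block (Suc (Suc j)) 0 (Suc j) (minv (TT (Suc (Suc j))))
      = (-1) ^ Suc j \<cdot>\<^sub>m (transpose_mat (Psi (Suc j)) * Di)"
    using blocks(2)[of 0] carriers
    by (simp del: lanczos_Psi.simps add: mat_dim_simps row_Di smult_smult_mat)
  have bottom_left: "block (Suc (Suc j)) (Suc j) 0 (minv (TT (Suc (Suc j))))
      = (-1) ^ Suc j \<cdot>\<^sub>m (Di * Psi (Suc j))"
    using blocks(3)[of 0] carriers
    by (simp del: lanczos_Psi.simps add: mat_dim_simps coupling_first_block_col smult_smult_mat)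
  show "block (Suc (Suc j)) 0 0 (minv (TT (Suc (Suc j))))
     = block (Suc j) 0 0 S + transpose_mat (Psi (Suc j)) * (minv (Delta (Suc (Suc j))) * Psi (Suc j))"
    using blocks(1)[of 0 0] carriers unfolding Di_def[symmetric]
    by (simp del: lanczos_Psi.simps add: mat_dim_simps coupling_first_block_col row_Di
        smult_smult_mat smult_one_mat)
  show "inverse_last_blocks (Suc (Suc j))"
    unfolding inverse_last_blocks_def using minv_TT_Suc(1) blocks(4) top_right bottom_left
    by (simp add: Di_def)
qed

end

lemma inverse_last_blocks_upto: "1 \<le> N \<Longrightarrow> N \<le> K \<Longrightarrow> inverse_last_blocks N"
proof (induction N)
  case (Suc N)
  then show ?case
    using inverse_last_blocks_1 inverse_blocks_Suc(1)[of "N - 1"] by (cases N) auto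
qed simp

lemma block11_minv_TT_Suc:
  assumes N: "1 \<le> N" "Suc N \<le> K"
  shows "block11 m (minv (TT (Suc N))) - block11 m (minv (TT N))
    = transpose_mat (Psi N) * (minv (Delta (Suc N)) * Psi N)"
proof -
  obtain j where j: "N = Suc j" using N by (cases N) auto
  have TT_N: "minv (TT N) \<in> carrier_mat (N * m) (N * m)"
    using has_minvD(2) inverse_last_blocks_upto[of N] N unfolding inverse_last_blocks_def by auto
  have TT_Suc_N: "minv (TT (Suc N)) \<in> carrier_mat (Suc N * m) (Suc N * m)"
    using has_minvD(2) inverse_last_blocks_upto[of "Suc N"] N unfolding inverse_last_blocks_def by auto
  have "block11 m (minv (TT (Suc N))) = block11 m (minv (TT N)) + transpose_mat (Psi N) * (minv (Delta (Suc N)) * Psi N)"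
    unfolding block11_eq_block_unit[OF TT_N N(1)] block11_eq_block_unit[OF TT_Suc_N le_SucI[OF N(1)]]
    using inverse_blocks_Suc(2)[of j] inverse_last_blocks_upto[of N] N j by simp
  then show ?thesis
    using Psi_carrier[of N] Delta[of "Suc N"] N by (intro eq_matI) (auto simp: block11_def)
qed

lemma lanczos_Phi_eq_Psi_mult: "G 0 \<in> carrier_mat m m \<Longrightarrow> j < K \<Longrightarrow> lanczos_Phi Om G j = Psi j * G 0"
proof (induction j)
  case (Suc j)
  then show ?case
    using Psi_carrier[of j] G_carrier[of "Suc j"] Delta[of "Suc j"]
    by (simp add: lanczos_Pi_def assoc_mult_mat_dim)
qed simp

end

theorem mainTheorem11:
  fixes n m k :: nat
    and A B X0 :: "real mat"
    and V G Om :: "nat \<Rightarrow> real mat"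
  assumes A: "spd n A"
    and B: "B \<in> carrier_mat n m"
    and X0: "X0 \<in> carrier_mat n m"
    and k: "k \<ge> 1"
    and krylov: "\<forall>j. 1 \<le> j \<and> j \<le> k + 1 \<longrightarrow>
                   vec_space.rank n (krylov_mat m A (bcg_R A B X0 0) j) = j * m"
    and lanczos: "block_lanczos n m A (bcg_R A B X0 0) V G Om (k + 1)"
    and fullrank: "\<forall>j \<le> k. full_col_rank (bcg_R A B X0 j)"
  shows "block11 m (minv (lanczos_T m Om G (k + 1))) - block11 m (minv (lanczos_T m Om G k))
           = minv (transpose_mat (lanczos_Phi Om G 0)) * transpose_mat (lanczos_Phi Om G k)
               * minv (lanczos_Delta Om G (k + 1)) * lanczos_Phi Om G k * minv (lanczos_Phi Om G 0)
       \<and> transpose_mat (lanczos_Phi Om G 0)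
           * (block11 m (minv (lanczos_T m Om G (k + 1))) - block11 m (minv (lanczos_T m Om G k)))
           * lanczos_Phi Om G 0
           = (transpose_mat (bcg_R A B X0 k) * bcg_R A B X0 k) * bcg_Upsilon A B X0 k
       \<and> (transpose_mat (bcg_R A B X0 k) * bcg_R A B X0 k) * bcg_Upsilon A B X0 k
           = bcg_Theta A B X0 k"
proof -
  interpret L: bcg_lanczos n m k A B X0 V G Om
    using A lanczos fullrank by unfold_locales simp_all
  have inv: "L.lanczos_invariant k" using L.lanczos_invariant_upto by simp
  interpret T: block_tridiagonal m "Suc k" Om G
    using L.Om_carrier L.G_carrier L.invariant_deltas[OF inv] unfolding L.deltas_invertible_def
    by unfold_locales auto
  have G_0: "has_minv m (G 0)" using L.lanczos_invariant_0 unfolding L.lanczos_invariant_def by simp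
  have Phi_k: "lanczos_Phi Om G k = lanczos_Psi m Om G k * G 0"
    using T.lanczos_Phi_eq_Psi_mult L.G_carrier by simp
  have diff: "block11 m (minv (lanczos_T m Om G (Suc k))) - block11 m (minv (lanczos_T m Om G k))
      = transpose_mat (lanczos_Psi m Om G k) * (minv (lanczos_Delta Om G (Suc k)) * lanczos_Psi m Om G k)"
    using T.block11_minv_TT_Suc k by simp
  have Psi: "lanczos_Psi m Om G k \<in> carrier_mat m m" using T.Psi_carrier[of k] by simp
  have Delta: "minv (lanczos_Delta Om G (Suc k)) \<in> carrier_mat m m"
    using has_minvD(2)[OF T.Delta(1)[of "Suc k"]] by simp
  show ?thesis
    unfolding Suc_eq_plus1[symmetric] diff Phi_k lanczos_Phi.simps(1) bcg_Theta_def
    using minv_transpose_congruence[OF G_0 Psi Delta] L.Theta_eq[OF inv, unfolded Phi_k] by simp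
qed

end
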